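(* Let $p\ge1$, $d=2^p$, and for each $l\in[p]$ let $\mathbf h_l\in\mathbb C^{2\times2}$ be Hermitian with $\mathbf h_l^2=\mathbf I$, and $\mathbf m_l\in\mathbb C^{2\times 2}$ Hermitian such that both $\mathbf m_l+\mathbf h_l\mathbf m_l\mathbf h_l$ and $\mathbf m_l-\mathbf h_l\mathbf m_l\mathbf h_l$ are nonzero. Let $\mathbf H_l=\mathbf I\otimes\cdots\otimes\mathbf I\otimes\mathbf h_l\otimes\mathbf I\otimes\cdots\otimes\mathbf I$ ($\mathbf h_l$ in the $l$-th tensor factor) and $\mathbf M=\mathbf m_1\otimes\cdots\otimes\mathbf m_p$. Then the QNN $(\mathbf H_1,\dots,\mathbf H_p;\mathbf M)$ is with linear independence, and there exists a dataset $\mathcal S$ whose loss $L(\cdot;\mathcal S)$ has, within one period $[0,\pi)^p$, $2^p-1$ spurious local minima (local minima whose values exceed the global minimum value by a positive amount).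
   Context: A $p$-parameter QNN on a $d$-dimensional system is given by Hermitian $\mathbf H_1,\dots,\mathbf H_p$ and Hermitian observable $\mathbf M$; $\mathbf U(\boldsymbol\theta)=e^{-i\theta_p\mathbf H_p}\cdots e^{-i\theta_1\mathbf H_1}$. A dataset is a finite set $\mathcal S=\{(\boldsymbol\rho_i,y_i)\}_{i=1}^m$ of density matrices (PSD, trace 1) and real labels, with loss $L(\boldsymbol\theta;\mathcal S)=\frac1m\sum_i\big(\operatorname{tr}(\mathbf U(\boldsymbol\theta)\boldsymbol\rho_i\mathbf U(\boldsymbol\theta)^\dagger\mathbf M)-y_i\big)^2$. Define $\Phi_l^{(0)}(\mathbf A)=\frac12(\mathbf A+\mathbf H_l\mathbf A\mathbf H_l)$, $\Phi_l^{(1)}(\mathbf A)=\frac12(\mathbf A-\mathbf H_l\mathbf A\mathbf H_l)$, $\Phi_l^{(2)}(\mathbf A)=\frac i2[\mathbf H_l,\mathbf A]$, $\Phi_{\boldsymbol\xi}=\Phi_1^{(\xi_1)}\circ\cdots\circ\Phi_p^{(\xi_p)}$. The QNN is with linear independence if $\{\Phi_{\boldsymbol\xi}(\mathbf M)\}_{\boldsymbol\xi\in\{0,1,2\}^p\setminus\{\mathbf 0\}}$ is linearly independent. *)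

theory Defs
  imports "HOL-Analysis.Analysis" "Jordan_Normal_Form.Matrix"
begin

definition adj :: "complex mat \<Rightarrow> complex mat" where
  "adj A = mat (dim_col A) (dim_row A) (\<lambda>(i,j). cnj (A $$ (j,i)))"

definition hermitian :: "complex mat \<Rightarrow> bool" where
  "hermitian A \<longleftrightarrow> A \<in> carrier_mat (dim_row A) (dim_row A) \<and> adj A = A"

definition mtrace :: "complex mat \<Rightarrow> complex" where
  "mtrace A = (\<Sum>i<dim_row A. A $$ (i,i))"

definition psd :: "complex mat \<Rightarrow> bool" where
  "psd A \<longleftrightarrow> hermitian A \<and>
     (\<forall>v :: nat \<Rightarrow> complex. 0 \<le> Re (\<Sum>i<dim_row A. \<Sum>j<dim_row A. cnj (v i) * A $$ (i,j) * v j))"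

definition density_matrix :: "nat \<Rightarrow> complex mat \<Rightarrow> bool" where
  "density_matrix d \<rho> \<longleftrightarrow> \<rho> \<in> carrier_mat d d \<and> psd \<rho> \<and> mtrace \<rho> = 1"

definition mat_exp :: "complex mat \<Rightarrow> complex mat" where
  "mat_exp A = mat (dim_row A) (dim_row A) (\<lambda>(i,j). \<Sum>k. (A ^\<^sub>m k) $$ (i,j) / of_nat (fact k))"

definition kron :: "complex mat \<Rightarrow> complex mat \<Rightarrow> complex mat" where
  "kron A B = mat (dim_row A * dim_row B) (dim_col A * dim_col B)
     (\<lambda>(i,j). A $$ (i div dim_row B, j div dim_col B) * B $$ (i mod dim_row B, j mod dim_col B))"

primrec kron_upto :: "(nat \<Rightarrow> complex mat) \<Rightarrow> nat \<Rightarrow> complex mat" where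
  "kron_upto m 0 = 1\<^sub>m 1"
| "kron_upto m (Suc l) = kron (kron_upto m l) (m (Suc l))"

text \<open>\<open>H_l = I \<otimes> ... \<otimes> h_l \<otimes> ... \<otimes> I\<close> on p qubits, h_l in the l-th factor (1-based).\<close>
definition local_op :: "nat \<Rightarrow> (nat \<Rightarrow> complex mat) \<Rightarrow> nat \<Rightarrow> complex mat" where
  "local_op p h l = kron (kron (1\<^sub>m (2 ^ (l - 1))) (h l)) (1\<^sub>m (2 ^ (p - l)))"

section \<open>QNNs: a QNN is (p, H_1..H_p, M); H indexed 1..p, parameters theta indexed 1..p\<close>

primrec qnn_U :: "nat \<Rightarrow> (nat \<Rightarrow> complex mat) \<Rightarrow> (nat \<Rightarrow> real) \<Rightarrow> nat \<Rightarrow> complex mat" where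
  "qnn_U d H \<theta> 0 = 1\<^sub>m d"
| "qnn_U d H \<theta> (Suc l) = mat_exp ((- \<i> * complex_of_real (\<theta> (Suc l))) \<cdot>\<^sub>m H (Suc l)) * qnn_U d H \<theta> l"

definition qnn_loss :: "nat \<Rightarrow> (nat \<Rightarrow> complex mat) \<Rightarrow> complex mat \<Rightarrow> (complex mat \<times> real) set
    \<Rightarrow> (nat \<Rightarrow> real) \<Rightarrow> real" where
  "qnn_loss p H M S \<theta> =
     (let U = qnn_U (dim_row M) H \<theta> p in
      (1 / real (card S)) * (\<Sum>(\<rho>, y)\<in>S. (Re (mtrace (U * \<rho> * adj U * M)) - y)\<^sup>2))"

definition dataset :: "nat \<Rightarrow> (complex mat \<times> real) set \<Rightarrow> bool" where
  "dataset d S \<longleftrightarrow> finite S \<and> S \<noteq> {} \<and> (\<forall>(\<rho>, y)\<in>S. density_matrix d \<rho>)"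

definition Phi :: "complex mat \<Rightarrow> nat \<Rightarrow> complex mat \<Rightarrow> complex mat" where
  "Phi H x A =
     (if x = 0 then (1/2) \<cdot>\<^sub>m (A + H * A * H)
      else if x = 1 then (1/2) \<cdot>\<^sub>m (A - H * A * H)
      else (\<i>/2) \<cdot>\<^sub>m (H * A - A * H))"

primrec Phi_seq :: "(nat \<Rightarrow> complex mat) \<Rightarrow> (nat \<Rightarrow> nat) \<Rightarrow> nat \<Rightarrow> complex mat \<Rightarrow> complex mat" where
  "Phi_seq H \<xi> 0 A = A"
| "Phi_seq H \<xi> (Suc l) A = Phi_seq H \<xi> l (Phi (H (Suc l)) (\<xi> (Suc l)) A)"

text \<open>Index set \<open>{0,1,2}^p \ {0}\<close>, as functions on 1..p that vanish elsewhere.\<close>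
definition xi_set :: "nat \<Rightarrow> (nat \<Rightarrow> nat) set" where
  "xi_set p = {\<xi>. (\<forall>l\<in>{1..p}. \<xi> l \<le> 2) \<and> (\<forall>l. l \<notin> {1..p} \<longrightarrow> \<xi> l = 0)} - {(\<lambda>_. 0)}"

definition with_linear_independence :: "nat \<Rightarrow> (nat \<Rightarrow> complex mat) \<Rightarrow> complex mat \<Rightarrow> bool" where
  "with_linear_independence p H M \<longleftrightarrow>
     (\<forall>c :: (nat \<Rightarrow> nat) \<Rightarrow> real.
        (\<forall>i<dim_row M. \<forall>j<dim_col M.
           (\<Sum>\<xi>\<in>xi_set p. complex_of_real (c \<xi>) * Phi_seq H \<xi> p M $$ (i,j)) = 0)
        \<longrightarrow> (\<forall>\<xi>\<in>xi_set p. c \<xi> = 0))"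

definition local_min_param :: "nat \<Rightarrow> ((nat \<Rightarrow> real) \<Rightarrow> real) \<Rightarrow> (nat \<Rightarrow> real) \<Rightarrow> bool" where
  "local_min_param p L \<theta> \<longleftrightarrow>
     (\<exists>\<epsilon>>0. \<forall>\<theta>'. (\<forall>l\<in>{1..p}. \<bar>\<theta>' l - \<theta> l\<bar> < \<epsilon>) \<longrightarrow> L \<theta> \<le> L \<theta>')"

definition spurious_local_min :: "nat \<Rightarrow> ((nat \<Rightarrow> real) \<Rightarrow> real) \<Rightarrow> (nat \<Rightarrow> real) \<Rightarrow> bool" where
  "spurious_local_min p L \<theta> \<longleftrightarrow> local_min_param p L \<theta> \<and> L \<theta> > (INF \<theta>'. L \<theta>')"

text \<open>One period \<open>[0,pi)^p\<close>; coordinates outside 1..p fixed to 0 so points are genuinely in R^p.\<close>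
definition period_box :: "nat \<Rightarrow> (nat \<Rightarrow> real) set" where
  "period_box p = {\<theta>. (\<forall>l\<in>{1..p}. 0 \<le> \<theta> l \<and> \<theta> l < pi) \<and> (\<forall>l. l \<notin> {1..p} \<longrightarrow> \<theta> l = 0)}"

end

(* Everything factorises over the qubits. As h_l is an involution, exp(-i t H_l) = cos t - i sin t H_l
   acts on the l-th tensor factor only, and Phi_xi(M) is the tensor product of the
   Phi^(xi_l)_{h_l}(m_l). On one qubit, Phi^(0)(m) commutes with h while Phi^(1)(m) and
   Phi^(2)(m) = i h Phi^(1)(m) anticommute with it, so these three Hermitian matrices are nonzero and
   pairwise orthogonal for the trace inner product; so are their tensor products, which gives
   linear independence.

   Conjugating m by the rotation gives Phi^(0)(m) + cos 2t Phi^(1)(m) + sin 2t Phi^(2)(m). The data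
   states are products of pure states that are eigenprojectors of h_j on all qubits but one, so each
   expectation depends on a single angle; with two such states per qubit and suitable labels the
   loss becomes sum_l w_l^2 g(theta_l) with w_l <> 0 and g(t) = (3/5 cos 2t - 8/15)^2 + sin^2 2t.
   Since g has local minima at 0 and pi/2 with g 0 < g (pi/2), every point of {0, pi/2}^p other
   than the origin is a spurious local minimum. *)

theory Submission
  imports Defs
begin

section \<open>Kronecker products\<close>

lemma sum_lessThan_mult_div_mod:
  fixes a b :: nat
  assumes "b > 0"
  shows "(\<Sum>r<a*b. f (r div b) (r mod b)) = (\<Sum>s<a. \<Sum>t<b. f s t :: 'a :: comm_monoid_add)"
proof -
  have "(\<Sum>r<a*b. f (r div b) (r mod b)) = (\<Sum>(s,t)\<in>{..<a} \<times> {..<b}. f s t)"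
  proof (rule sum.reindex_bij_witness[where i = "\<lambda>(s,t). s * b + t" and j = "\<lambda>r. (r div b, r mod b)"])
    fix st assume "st \<in> {..<a} \<times> {..<b}"
    then obtain s t where st: "st = (s,t)" "s < a" "t < b" by blast
    then have "s * b + t < (s + 1) * b" by simp
    also have "\<dots> \<le> a * b" using st(2) by (intro mult_right_mono) auto
    finally show "(\<lambda>(s,t). s * b + t) st \<in> {..<a*b}" using st(1) by simp
  qed (use assms in \<open>auto simp: less_mult_imp_div_less\<close>)
  then show ?thesis by (simp add: sum.cartesian_product)
qed

lemma dim_row_kron[simp]: "dim_row (kron A B) = dim_row A * dim_row B"
  and dim_col_kron[simp]: "dim_col (kron A B) = dim_col A * dim_col B"
  by (auto simp: kron_def)

lemma kron_carrier_mat[simp, intro]: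
  "A \<in> carrier_mat ra ca \<Longrightarrow> B \<in> carrier_mat rb cb \<Longrightarrow> kron A B \<in> carrier_mat (ra * rb) (ca * cb)"
  unfolding carrier_mat_def by simp

lemma index_kron:
  "i < dim_row A * dim_row B \<Longrightarrow> j < dim_col A * dim_col B \<Longrightarrow>
   kron A B $$ (i,j) = A $$ (i div dim_row B, j div dim_col B) * B $$ (i mod dim_row B, j mod dim_col B)"
  by (simp add: kron_def)

lemma div_less_of_less_mult: "i < a * (b::nat) \<Longrightarrow> i div b < a"
  by (simp add: less_mult_imp_div_less)

lemma mod_less_of_less_mult: "i < a * (b::nat) \<Longrightarrow> i mod b < b"
  by (cases "b = 0") auto

lemma index_mult_mat_sum:
  assumes "i < dim_row A" "j < dim_col B" "dim_col A = dim_row B"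
  shows "(A * B) $$ (i,j) = (\<Sum>k<dim_row B. A $$ (i,k) * B $$ (k,j))"
  using assms by (simp add: scalar_prod_def lessThan_atLeast0)

lemma mult_kron:
  assumes A: "A \<in> carrier_mat na nb" and C: "C \<in> carrier_mat nb nc"
    and B: "B \<in> carrier_mat ka kb" and D: "D \<in> carrier_mat kb kc"
  shows "kron A B * kron C D = kron (A * C) (B * D)"
proof (rule eq_matI)
  fix i j assume "i < dim_row (kron (A * C) (B * D))" and "j < dim_col (kron (A * C) (B * D))"
  then have i: "i < na * ka" and j: "j < nc * kc" using A B C D by auto
  have "(kron A B * kron C D) $$ (i,j) = (\<Sum>r<nb*kb. kron A B $$ (i,r) * kron C D $$ (r,j))"
    using A B C D i j by (subst index_mult_mat_sum) auto
  also have "\<dots> = (\<Sum>r<nb*kb. (A $$ (i div ka, r div kb) * C $$ (r div kb, j div kc)) *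
          (B $$ (i mod ka, r mod kb) * D $$ (r mod kb, j mod kc)))"
    using A B C D i j by (auto simp: index_kron mult.assoc mult.left_commute intro!: sum.cong)
  also have "\<dots> = (\<Sum>s<nb. \<Sum>t<kb. (A $$ (i div ka, s) * C $$ (s, j div kc)) *
          (B $$ (i mod ka, t) * D $$ (t, j mod kc)))"
    by (cases "kb = 0") (simp_all add: sum_lessThan_mult_div_mod[where
          f = "\<lambda>s t. (A $$ (i div ka, s) * C $$ (s, j div kc)) * (B $$ (i mod ka, t) * D $$ (t, j mod kc))"])
  also have "\<dots> = (A * C) $$ (i div ka, j div kc) * (B * D) $$ (i mod ka, j mod kc)"
    using A B C D i j
    by (simp add: index_mult_mat_sum div_less_of_less_mult mod_less_of_less_mult sum_product
        del: index_mult_mat)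
  also have "\<dots> = kron (A * C) (B * D) $$ (i,j)"
    using A B C D i j by (simp add: index_kron)
  finally show "(kron A B * kron C D) $$ (i,j) = kron (A * C) (B * D) $$ (i,j)" .
qed (use assms in auto)

lemma kron_add_left:
  "A \<in> carrier_mat ra ca \<Longrightarrow> A' \<in> carrier_mat ra ca \<Longrightarrow> kron (A + A') B = kron A B + kron A' B"
  by (intro eq_matI) (auto simp: index_kron div_less_of_less_mult algebra_simps)

lemma kron_add_right:
  "B \<in> carrier_mat rb cb \<Longrightarrow> B' \<in> carrier_mat rb cb \<Longrightarrow> kron A (B + B') = kron A B + kron A B'"
  by (intro eq_matI) (auto simp: index_kron mod_less_of_less_mult algebra_simps)

lemma kron_minus_left:
  "A \<in> carrier_mat ra ca \<Longrightarrow> A' \<in> carrier_mat ra ca \<Longrightarrow> kron (A - A') B = kron A B - kron A' B"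
  by (intro eq_matI) (auto simp: index_kron div_less_of_less_mult algebra_simps)

lemma kron_minus_right:
  "B \<in> carrier_mat rb cb \<Longrightarrow> B' \<in> carrier_mat rb cb \<Longrightarrow> kron A (B - B') = kron A B - kron A B'"
  by (intro eq_matI) (auto simp: index_kron mod_less_of_less_mult algebra_simps)

lemma kron_smult_left: "kron (c \<cdot>\<^sub>m A) B = c \<cdot>\<^sub>m kron A B"
  by (intro eq_matI) (auto simp: index_kron div_less_of_less_mult algebra_simps)

lemma kron_smult_right: "kron A (c \<cdot>\<^sub>m B) = c \<cdot>\<^sub>m kron A B"
  by (intro eq_matI) (auto simp: index_kron mod_less_of_less_mult algebra_simps)

lemma kron_assoc: "kron (kron A B) C = kron A (kron B C)"
proof (rule eq_matI)
  fix i j assume "i < dim_row (kron A (kron B C))" and "j < dim_col (kron A (kron B C))"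
  then have i: "i < dim_row A * dim_row B * dim_row C" and j: "j < dim_col A * dim_col B * dim_col C"
    by (auto simp: mult.assoc)
  have div_mod: "k div c div b = k div (b * c)" "k div c mod b = k mod (b * c) div c"
    "k mod (b * c) mod c = k mod c" if "c > 0" for k b c :: nat
  proof -
    have m: "k mod (b * c) = c * (k div c mod b) + k mod c"
      by (metis mod_mult2_eq mult.commute)
    show "k div c div b = k div (b * c)" by (metis div_mult2_eq mult.commute)
    show "k div c mod b = k mod (b * c) div c" "k mod (b * c) mod c = k mod c"
      unfolding m using that by simp_all
  qed
  have pos: "dim_row C > 0" "dim_col C > 0" using i j by (auto intro!: Nat.gr0I)
  show "kron (kron A B) C $$ (i,j) = kron A (kron B C) $$ (i,j)"
    using i j pos
    by (simp add: index_kron div_less_of_less_mult mod_less_of_less_mult div_mod mult.assoc)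
qed (auto simp: mult.assoc)

lemma kron_one_mat: "kron (1\<^sub>m a) (1\<^sub>m b) = 1\<^sub>m (a * b)"
proof (rule eq_matI)
  fix i j assume "i < dim_row (1\<^sub>m (a * b))" "j < dim_col (1\<^sub>m (a * b))"
  then have ij: "i < a * b" "j < a * b" by auto
  have "(i div b = j div b \<and> i mod b = j mod b) = (i = j)"
    by (metis div_mult_mod_eq)
  then show "kron (1\<^sub>m a) (1\<^sub>m b) $$ (i, j) = 1\<^sub>m (a * b) $$ (i, j)"
    using ij by (auto simp: index_kron div_less_of_less_mult mod_less_of_less_mult)
qed auto

lemma kron_one_mat_1_right[simp]: "kron A (1\<^sub>m 1) = A"
  by (intro eq_matI) (auto simp: index_kron)

lemma mtrace_kron:
  assumes A: "A \<in> carrier_mat a a" and B: "B \<in> carrier_mat b b"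
  shows "mtrace (kron A B) = mtrace A * mtrace B"
proof (cases "b = 0")
  case True then show ?thesis using A B by (simp add: mtrace_def)
next
  case False
  have "mtrace (kron A B) = (\<Sum>r<a*b. A $$ (r div b, r div b) * B $$ (r mod b, r mod b))"
    using A B by (auto simp: mtrace_def index_kron intro!: sum.cong)
  also have "\<dots> = mtrace A * mtrace B"
    using A B False
    by (simp add: sum_lessThan_mult_div_mod[where f = "\<lambda>s t. A $$ (s,s) * B $$ (t,t)"] mtrace_def sum_product)
  finally show ?thesis .
qed

section \<open>Adjoints and traces\<close>

declare index_mult_mat(1)[simp del]

lemma dim_row_adj[simp]: "dim_row (adj A) = dim_col A"
  and dim_col_adj[simp]: "dim_col (adj A) = dim_row A"
  by (auto simp: adj_def)

lemma index_adj[simp]: "i < dim_col A \<Longrightarrow> j < dim_row A \<Longrightarrow> adj A $$ (i,j) = cnj (A $$ (j,i))"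
  by (simp add: adj_def)

lemma adj_carrier_mat[simp]: "A \<in> carrier_mat n k \<Longrightarrow> adj A \<in> carrier_mat k n"
  unfolding carrier_mat_def by simp

lemma adj_kron: "adj (kron A B) = kron (adj A) (adj B)"
  by (intro eq_matI) (auto simp: index_kron div_less_of_less_mult mod_less_of_less_mult)

lemma adj_mult:
  "A \<in> carrier_mat n k \<Longrightarrow> B \<in> carrier_mat k l \<Longrightarrow> adj (A * B) = adj B * adj A"
  by (intro eq_matI) (auto simp: index_mult_mat_sum sum_distrib_left mult.commute)

lemma adj_add: "A \<in> carrier_mat n k \<Longrightarrow> B \<in> carrier_mat n k \<Longrightarrow> adj (A + B) = adj A + adj B"
  by (intro eq_matI) auto

lemma adj_minus: "A \<in> carrier_mat n k \<Longrightarrow> B \<in> carrier_mat n k \<Longrightarrow> adj (A - B) = adj A - adj B"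
  by (intro eq_matI) auto

lemma adj_smult: "adj (c \<cdot>\<^sub>m A) = cnj c \<cdot>\<^sub>m adj A"
  by (intro eq_matI) auto

lemma adj_adj[simp]: "adj (adj A) = A"
  by (intro eq_matI) auto

lemma adj_one_mat[simp]: "adj (1\<^sub>m n) = 1\<^sub>m n"
  by (intro eq_matI) auto

lemma mtrace_mult_comm:
  assumes A: "A \<in> carrier_mat n k" and B: "B \<in> carrier_mat k n"
  shows "mtrace (A * B) = mtrace (B * A)"
proof -
  have "mtrace (A * B) = (\<Sum>i<n. \<Sum>j<k. A $$ (i,j) * B $$ (j,i))"
    using A B by (auto simp: mtrace_def index_mult_mat_sum)
  also have "\<dots> = (\<Sum>j<k. \<Sum>i<n. B $$ (j,i) * A $$ (i,j))"
    by (subst sum.swap) (simp add: mult.commute)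
  also have "\<dots> = mtrace (B * A)"
    using A B by (auto simp: mtrace_def index_mult_mat_sum)
  finally show ?thesis .
qed

lemma mtrace_add: "A \<in> carrier_mat n n \<Longrightarrow> B \<in> carrier_mat n n \<Longrightarrow> mtrace (A + B) = mtrace A + mtrace B"
  by (simp add: mtrace_def sum.distrib)

lemma mtrace_minus: "A \<in> carrier_mat n n \<Longrightarrow> B \<in> carrier_mat n n \<Longrightarrow> mtrace (A - B) = mtrace A - mtrace B"
  by (simp add: mtrace_def sum_subtractf)

lemma mtrace_uminus: "A \<in> carrier_mat n n \<Longrightarrow> mtrace (- A) = - mtrace A"
  by (simp add: mtrace_def sum_negf)

lemma mtrace_smult: "A \<in> carrier_mat n n \<Longrightarrow> mtrace (c \<cdot>\<^sub>m A) = c * mtrace A"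
  by (simp add: mtrace_def sum_distrib_left)

lemma mtrace_one_mat[simp]: "mtrace (1\<^sub>m n) = of_nat n"
  by (simp add: mtrace_def)

lemma mtrace_adj: "A \<in> carrier_mat n n \<Longrightarrow> mtrace (adj A) = cnj (mtrace A)"
  by (simp add: mtrace_def)

lemma mtrace_mult_self_adjoint_real:
  assumes A: "A \<in> carrier_mat n n" and B: "B \<in> carrier_mat n n"
    and "adj A = A" and "adj B = B"
  shows "of_real (Re (mtrace (A * B))) = mtrace (A * B)"
proof -
  have "cnj (mtrace (A * B)) = mtrace (adj (A * B))"
    using A B by (simp add: mtrace_adj[of _ n])
  also have "\<dots> = mtrace (A * B)"
    using A B assms(3,4) by (simp add: adj_mult mtrace_mult_comm)
  finally show ?thesis by (simp add: Reals_cnj_iff)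
qed

lemma mtrace_mult_adj_self:
  assumes A: "A \<in> carrier_mat n k"
  shows "mtrace (A * adj A) = of_real (\<Sum>i<n. \<Sum>j<k. (cmod (A $$ (i,j)))\<^sup>2)"
  using A by (simp add: mtrace_def index_mult_mat_sum complex_mult_cnj cmod_power2)

lemma Re_mtrace_mult_adj_self_pos:
  assumes A: "A \<in> carrier_mat n k" and nz: "A \<noteq> 0\<^sub>m n k"
  shows "Re (mtrace (A * adj A)) > 0"
proof -
  obtain i j where ij: "i < n" "j < k" "A $$ (i,j) \<noteq> 0"
    using nz A by (metis carrier_matD eq_matI index_zero_mat)
  have "0 < (cmod (A $$ (i,j)))\<^sup>2" using ij by simp
  also have "\<dots> \<le> (\<Sum>j<k. (cmod (A $$ (i,j)))\<^sup>2)"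
    using ij by (intro member_le_sum) auto
  also have "\<dots> \<le> (\<Sum>i<n. \<Sum>j<k. (cmod (A $$ (i,j)))\<^sup>2)"
    using ij by (intro member_le_sum[of i _ "\<lambda>i. \<Sum>j<k. (cmod (A $$ (i,j)))\<^sup>2"]) (auto intro: sum_nonneg)
  finally show ?thesis using A by (simp add: mtrace_mult_adj_self)
qed

lemma psd_mult_adj:
  assumes X: "X \<in> carrier_mat n k"
  shows "psd (X * adj X)"
proof -
  have "0 \<le> Re (\<Sum>i<n. \<Sum>j<n. cnj (v i) * (X * adj X) $$ (i,j) * v j)" for v :: "nat \<Rightarrow> complex"
  proof -
    define w where "w r = (\<Sum>i<n. cnj (v i) * X $$ (i,r))" for r
    have "(\<Sum>i<n. \<Sum>j<n. cnj (v i) * (X * adj X) $$ (i,j) * v j)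
        = (\<Sum>i<n. \<Sum>j<n. \<Sum>r<k. cnj (v i) * X $$ (i,r) * (cnj (X $$ (j,r)) * v j))"
      using X by (intro sum.cong refl) (auto simp: index_mult_mat_sum sum_distrib_left sum_distrib_right mult_ac)
    also have "\<dots> = (\<Sum>r<k. w r * cnj (w r))"
      unfolding w_def
      by (simp add: sum_product sum_distrib_left sum_distrib_right mult_ac)
         (subst sum.swap, rule sum.cong, simp, subst sum.swap, simp)
    also have "\<dots> = (\<Sum>r<k. of_real ((cmod (w r))\<^sup>2))"
      by (simp add: complex_mult_cnj cmod_power2)
    finally show ?thesis by (simp add: sum_nonneg)
  qed
  then show ?thesis
    using X by (auto simp: psd_def hermitian_def adj_mult[of X n k "adj X" n])
qed

lemma smult_mat_eq_zero_iff:
  fixes A :: "complex mat"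
  assumes "A \<in> carrier_mat nr nc" "c \<noteq> 0"
  shows "c \<cdot>\<^sub>m A = 0\<^sub>m nr nc \<longleftrightarrow> A = 0\<^sub>m nr nc"
proof
  assume z: "c \<cdot>\<^sub>m A = 0\<^sub>m nr nc"
  show "A = 0\<^sub>m nr nc"
  proof (rule eq_matI)
    fix i j assume ij: "i < dim_row (0\<^sub>m nr nc)" "j < dim_col (0\<^sub>m nr nc)"
    have "(c \<cdot>\<^sub>m A) $$ (i,j) = 0\<^sub>m nr nc $$ (i,j)" by (simp only: z)
    then show "A $$ (i,j) = 0\<^sub>m nr nc $$ (i,j)" using ij assms by simp
  qed (use assms in auto)
qed simp

text \<open>Fixing the dimension lets the simplifier discharge the carrier conditions of the ring laws
  of square matrices.\<close>

locale square_matrices = fixes n :: nat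
begin

lemma carrier_mat_closed[simp]:
  fixes X Y :: "complex mat"
  shows "X \<in> carrier_mat n n \<Longrightarrow> Y \<in> carrier_mat n n \<Longrightarrow> X * Y \<in> carrier_mat n n"
    "X \<in> carrier_mat n n \<Longrightarrow> Y \<in> carrier_mat n n \<Longrightarrow> X + Y \<in> carrier_mat n n"
    "X \<in> carrier_mat n n \<Longrightarrow> Y \<in> carrier_mat n n \<Longrightarrow> X - Y \<in> carrier_mat n n"
    "X \<in> carrier_mat n n \<Longrightarrow> - X \<in> carrier_mat n n"
    "X \<in> carrier_mat n n \<Longrightarrow> adj X \<in> carrier_mat n n"
  by auto

lemma mult_assoc_square[simp]:
  fixes X Y Z :: "complex mat"
  shows "X \<in> carrier_mat n n \<Longrightarrow> Y \<in> carrier_mat n n \<Longrightarrow> Z \<in> carrier_mat n n \<Longrightarrow> X * Y * Z = X * (Y * Z)"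
  by (rule assoc_mult_mat) auto

lemma distribs[simp]:
  fixes X Y Z :: "complex mat"
  assumes "X \<in> carrier_mat n n" "Y \<in> carrier_mat n n" "Z \<in> carrier_mat n n"
  shows "X * (Y + Z) = X * Y + X * Z" "(X + Y) * Z = X * Z + Y * Z"
    "X * (Y - Z) = X * Y - X * Z" "(X - Y) * Z = X * Z - Y * Z"
  using assms
  by (auto simp: mult_add_distrib_mat[where nr = n and nc = n and n = n] add_mult_distrib_mat[where nr = n and nc = n and n = n]
    mult_minus_distrib_mat[where nr = n and nc = n and n = n] minus_mult_distrib_mat[where nr = n and nc = n and n = n])

lemma smult_distribs[simp]:
  fixes X Y :: "complex mat"
  assumes "X \<in> carrier_mat n n" "Y \<in> carrier_mat n n"
  shows "X * (c \<cdot>\<^sub>m Y) = c \<cdot>\<^sub>m (X * Y)" "(c \<cdot>\<^sub>m X) * Y = c \<cdot>\<^sub>m (X * Y)"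
  using assms by (auto simp: mult_smult_distrib mult_smult_assoc_mat)

lemma one_mat_mult[simp]:
  fixes X :: "complex mat"
  assumes "X \<in> carrier_mat n n"
  shows "1\<^sub>m n * X = X" "X * 1\<^sub>m n = X"
  using assms by auto

lemma eq_square_matI:
  fixes X Y :: "complex mat"
  shows "X \<in> carrier_mat n n \<Longrightarrow> Y \<in> carrier_mat n n \<Longrightarrow> (\<And>i j. i < n \<Longrightarrow> j < n \<Longrightarrow> X $$ (i,j) = Y $$ (i,j)) \<Longrightarrow> X = Y"
  by (intro eq_matI) auto

lemmas mtrace_simps = mtrace_add[of _ n] mtrace_minus[of _ n] mtrace_smult[of _ n] mtrace_uminus[of _ n]

lemma mtrace_comm:
  fixes X Y :: "complex mat"
  shows "X \<in> carrier_mat n n \<Longrightarrow> Y \<in> carrier_mat n n \<Longrightarrow> mtrace (X * Y) = mtrace (Y * X)"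
  by (rule mtrace_mult_comm) auto

lemmas adj_simps = adj_mult[of _ n n _ n] adj_add[of _ n n] adj_minus[of _ n n] adj_smult

end

definition mat_family :: "nat \<Rightarrow> (nat \<Rightarrow> complex mat) \<Rightarrow> nat \<Rightarrow> bool" where
  "mat_family d X n \<longleftrightarrow> (\<forall>j\<in>{1..n}. X j \<in> carrier_mat d d)"

lemma mat_family_Suc: "mat_family d X (Suc n) \<longleftrightarrow> mat_family d X n \<and> X (Suc n) \<in> carrier_mat d d"
  by (simp add: mat_family_def atLeastAtMostSuc_conv conj_commute)

lemma mat_family_mult: "mat_family d X n \<Longrightarrow> mat_family d Y n \<Longrightarrow> mat_family d (\<lambda>j. X j * Y j) n"
  and mat_family_adj: "mat_family d X n \<Longrightarrow> mat_family d (\<lambda>j. adj (X j)) n"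
  by (auto simp: mat_family_def)

lemma kron_upto_carrier_mat: "mat_family d X n \<Longrightarrow> kron_upto X n \<in> carrier_mat (d^n) (d^n)"
  by (induction n) (auto simp: mat_family_Suc mult.commute)

lemma kron_upto_cong: "(\<And>j. j \<in> {1..n} \<Longrightarrow> X j = Y j) \<Longrightarrow> kron_upto X n = kron_upto Y n"
  by (induction n) auto

lemma kron_upto_mult:
  "mat_family d X n \<Longrightarrow> mat_family d Y n \<Longrightarrow> kron_upto X n * kron_upto Y n = kron_upto (\<lambda>j. X j * Y j) n"
proof (induction n)
  case (Suc n)
  then have "mat_family d X n" "mat_family d Y n" "X (Suc n) \<in> carrier_mat d d" "Y (Suc n) \<in> carrier_mat d d"
    by (simp_all add: mat_family_Suc)
  with Suc.IH show ?case
    using kron_upto_carrier_mat[of d X n] kron_upto_carrier_mat[of d Y n]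
    by (simp add: mult_kron[where kb = d and nb = "d^n"])
qed simp

lemma adj_kron_upto: "adj (kron_upto X n) = kron_upto (\<lambda>j. adj (X j)) n"
  by (induction n) (auto simp: adj_kron)

lemma mtrace_kron_upto: "mat_family d X n \<Longrightarrow> mtrace (kron_upto X n) = (\<Prod>j=1..n. mtrace (X j))"
proof (induction n)
  case (Suc n)
  then have "mat_family d X n" "X (Suc n) \<in> carrier_mat d d"
    by (simp_all add: mat_family_Suc)
  with Suc.IH show ?case
    using kron_upto_carrier_mat[of d X n]
    by (simp add: mtrace_kron[where a = "d^n" and b = d] prod.nat_ivl_Suc' mult.commute)
qed (simp add: mtrace_def)

lemma kron_upto_one_mat: "(\<And>j. j \<in> {1..n} \<Longrightarrow> X j = 1\<^sub>m d) \<Longrightarrow> kron_upto X n = 1\<^sub>m (d^n)"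
  by (induction n) (auto simp: kron_one_mat mult.commute)

lemma kron_upto_add: "kron_upto X (l + k) = kron (kron_upto X l) (kron_upto (\<lambda>j. X (l + j)) k)"
  by (induction k) (auto simp: kron_assoc simp flip: One_nat_def)

lemma kron_upto_fun_upd:
  assumes "1 \<le> l" "l \<le> n"
  shows "kron_upto (X(l := Z)) n = kron (kron (kron_upto X (l - 1)) Z) (kron_upto (\<lambda>j. X (l + j)) (n - l))"
proof -
  have "kron_upto (X(l := Z)) n = kron (kron_upto (X(l := Z)) l) (kron_upto (\<lambda>j. (X(l := Z)) (l + j)) (n - l))"
    using kron_upto_add[of "X(l := Z)" l "n - l"] assms by simp
  also have "kron_upto (\<lambda>j. (X(l := Z)) (l + j)) (n - l) = kron_upto (\<lambda>j. X (l + j)) (n - l)"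
    by (rule kron_upto_cong) auto
  also have "kron_upto (X(l := Z)) (l - 1) = kron_upto X (l - 1)"
    by (rule kron_upto_cong) auto
  then have "kron_upto (X(l := Z)) l = kron (kron_upto X (l - 1)) Z"
    using assms by (cases l) auto
  finally show ?thesis .
qed

lemma kron_upto_eq_kron_slot:
  "1 \<le> l \<Longrightarrow> l \<le> n \<Longrightarrow>
   kron_upto X n = kron (kron (kron_upto X (l - 1)) (X l)) (kron_upto (\<lambda>j. X (l + j)) (n - l))"
  using kron_upto_fun_upd[of l n X "X l"] by simp

section \<open>Operators acting on a single tensor factor\<close>

lemma mult_kron_slot_left:
  assumes "L \<in> carrier_mat a a" "R \<in> carrier_mat r r" "H \<in> carrier_mat d d" "Y \<in> carrier_mat d d"
  shows "kron (kron (1\<^sub>m a) H) (1\<^sub>m r) * kron (kron L Y) R = kron (kron L (H * Y)) R"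
proof -
  have "kron (kron (1\<^sub>m a) H) (1\<^sub>m r) * kron (kron L Y) R = kron (kron (1\<^sub>m a) H * kron L Y) (1\<^sub>m r * R)"
    using assms by (intro mult_kron[where nb = "a * d" and kb = r]) auto
  also have "kron (1\<^sub>m a) H * kron L Y = kron (1\<^sub>m a * L) (H * Y)"
    using assms by (intro mult_kron[where nb = a and kb = d]) auto
  finally show ?thesis using assms by simp
qed

lemma mult_kron_slot_right:
  assumes "L \<in> carrier_mat a a" "R \<in> carrier_mat r r" "H \<in> carrier_mat d d" "Y \<in> carrier_mat d d"
  shows "kron (kron L Y) R * kron (kron (1\<^sub>m a) H) (1\<^sub>m r) = kron (kron L (Y * H)) R"
proof -
  have "kron (kron L Y) R * kron (kron (1\<^sub>m a) H) (1\<^sub>m r) = kron (kron L Y * kron (1\<^sub>m a) H) (R * 1\<^sub>m r)"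
    using assms by (intro mult_kron[where nb = "a * d" and kb = r]) auto
  also have "kron L Y * kron (1\<^sub>m a) H = kron (L * 1\<^sub>m a) (Y * H)"
    using assms by (intro mult_kron[where nb = a and kb = d]) auto
  finally show ?thesis using assms by simp
qed

lemma add_kron_slot:
  assumes "L \<in> carrier_mat a a" "Y \<in> carrier_mat d d" "Z \<in> carrier_mat d d"
  shows "kron (kron L Y) R + kron (kron L Z) R = kron (kron L (Y + Z)) R"
  using assms by (simp add: kron_add_left[where ra = "a * d" and ca = "a * d"] kron_add_right[where rb = d and cb = d])

lemma minus_kron_slot:
  assumes "L \<in> carrier_mat a a" "Y \<in> carrier_mat d d" "Z \<in> carrier_mat d d"
  shows "kron (kron L Y) R - kron (kron L Z) R = kron (kron L (Y - Z)) R"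
  using assms by (simp add: kron_minus_left[where ra = "a * d" and ca = "a * d"] kron_minus_right[where rb = d and cb = d])

lemma smult_kron_slot: "c \<cdot>\<^sub>m kron (kron L Y) R = kron (kron L (c \<cdot>\<^sub>m Y)) R"
  by (simp add: kron_smult_left kron_smult_right)

lemma Phi_carrier_mat: "H \<in> carrier_mat n n \<Longrightarrow> A \<in> carrier_mat n n \<Longrightarrow> Phi H x A \<in> carrier_mat n n"
  by (auto simp: Phi_def)

lemma Phi_kron_slot:
  assumes "L \<in> carrier_mat a a" "R \<in> carrier_mat r r" "H \<in> carrier_mat d d" "Y \<in> carrier_mat d d"
  shows "Phi (kron (kron (1\<^sub>m a) H) (1\<^sub>m r)) x (kron (kron L Y) R) = kron (kron L (Phi H x Y)) R"
proof -
  let ?H = "kron (kron (1\<^sub>m a) H) (1\<^sub>m r)"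
  have "?H * kron (kron L Y) R = kron (kron L (H * Y)) R"
    "kron (kron L Y) R * ?H = kron (kron L (Y * H)) R"
    "kron (kron L (H * Y)) R * ?H = kron (kron L (H * Y * H)) R"
    using assms by (simp_all add: mult_kron_slot_left mult_kron_slot_right)
  then show ?thesis
    unfolding Phi_def using assms by (simp add: add_kron_slot[where d = d] minus_kron_slot[where d = d] smult_kron_slot)
qed

lemma power_of_two_split: "1 \<le> l \<Longrightarrow> l \<le> p \<Longrightarrow> (2::nat) ^ (l - 1) * 2 * 2 ^ (p - l) = 2 ^ p"
  by (metis One_nat_def Suc_pred le_add_diff_inverse less_eq_Suc_le power_Suc2 power_add)

lemma one_mat_kron_slot: "1 \<le> l \<Longrightarrow> l \<le> p \<Longrightarrow> 1\<^sub>m (2^p) = kron (kron (1\<^sub>m (2^(l-1))) (1\<^sub>m 2)) (1\<^sub>m (2^(p-l)))"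
  by (simp only: kron_one_mat power_of_two_split)

lemma local_op_carrier_mat:
  "1 \<le> l \<Longrightarrow> l \<le> p \<Longrightarrow> h l \<in> carrier_mat 2 2 \<Longrightarrow> local_op p h l \<in> carrier_mat (2^p) (2^p)"
  unfolding local_op_def by (metis power_of_two_split kron_carrier_mat one_carrier_mat)

lemma local_op_square:
  "1 \<le> l \<Longrightarrow> l \<le> p \<Longrightarrow> h l \<in> carrier_mat 2 2 \<Longrightarrow> h l * h l = 1\<^sub>m 2 \<Longrightarrow>
   local_op p h l * local_op p h l = 1\<^sub>m (2^p)"
  unfolding local_op_def by (simp add: mult_kron_slot_left one_mat_kron_slot[of l p])

lemma Phi_local_op_kron_upto:
  assumes "1 \<le> l" "l \<le> p" "mat_family 2 X p" "h l \<in> carrier_mat 2 2"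
  shows "Phi (local_op p h l) x (kron_upto X p) = kron_upto (X(l := Phi (h l) x (X l))) p"
proof -
  have "mat_family 2 X (l - 1)" "mat_family 2 (\<lambda>j. X (l + j)) (p - l)" "X l \<in> carrier_mat 2 2"
    using assms by (auto simp: mat_family_def)
  then show ?thesis
    unfolding local_op_def kron_upto_eq_kron_slot[OF assms(1,2), of X] kron_upto_fun_upd[OF assms(1,2)]
    using assms kron_upto_carrier_mat by (intro Phi_kron_slot) auto
qed

lemma Phi_seq_kron_upto:
  assumes h: "\<forall>l\<in>{1..p}. h l \<in> carrier_mat 2 2" and X: "mat_family 2 X p" and "k \<le> p"
  shows "Phi_seq (local_op p h) \<xi> k (kron_upto X p)
    = kron_upto (\<lambda>j. if j \<le> k then Phi (h j) (\<xi> j) (X j) else X j) p"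
  using X \<open>k \<le> p\<close>
proof (induction k arbitrary: X)
  case 0 then show ?case by (auto intro: kron_upto_cong)
next
  case (Suc k)
  let ?X' = "X(Suc k := Phi (h (Suc k)) (\<xi> (Suc k)) (X (Suc k)))"
  have "mat_family 2 ?X' p" using Suc.prems h by (auto simp: mat_family_def intro!: Phi_carrier_mat)
  have "Phi_seq (local_op p h) \<xi> (Suc k) (kron_upto X p) = Phi_seq (local_op p h) \<xi> k (kron_upto ?X' p)"
    using Suc.prems h by (simp add: Phi_local_op_kron_upto)
  also have "\<dots> = kron_upto (\<lambda>j. if j \<le> k then Phi (h j) (\<xi> j) (?X' j) else ?X' j) p"
    using Suc \<open>mat_family 2 ?X' p\<close> by simp
  also have "\<dots> = kron_upto (\<lambda>j. if j \<le> Suc k then Phi (h j) (\<xi> j) (X j) else X j) p"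
    by (intro kron_upto_cong) (auto simp: le_Suc_eq)
  finally show ?case .
qed

section \<open>Exponentials of involutions and the QNN unitary\<close>

lemma power_smult_involution:
  fixes A :: "complex mat"
  assumes A: "A \<in> carrier_mat n n" and AA: "A * A = 1\<^sub>m n"
  shows "(c \<cdot>\<^sub>m A) ^\<^sub>m k = (c ^ k) \<cdot>\<^sub>m (if even k then 1\<^sub>m n else A)"
proof (induction k)
  case 0 then show ?case using A by (intro eq_matI) auto
next
  case (Suc k)
  define B where "B = (if even k then 1\<^sub>m n else A)"
  have B: "B \<in> carrier_mat n n" using A by (simp add: B_def)
  have "(c \<cdot>\<^sub>m A) ^\<^sub>m Suc k = (c ^ k \<cdot>\<^sub>m B) * (c \<cdot>\<^sub>m A)"
    using Suc by (simp add: B_def)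
  also have "\<dots> = (c ^ Suc k) \<cdot>\<^sub>m (B * A)"
    using A B by (intro eq_matI) (auto simp: index_mult_mat_sum sum_distrib_left algebra_simps intro!: sum.cong)
  finally show ?case
    using A AA by (simp add: B_def)
qed

lemma exp_series_even_odd:
  fixes c d g :: complex
  shows "(\<lambda>k. c ^ k * (if even k then d else g) / of_nat (fact k)) sums
          (d * ((exp c + exp (- c)) / 2) + g * ((exp c - exp (- c)) / 2))"
proof -
  have "(\<lambda>k. x ^ k / of_nat (fact k)) sums exp x" for x :: complex
    using exp_converges[of x] by (simp add: scaleR_conv_of_real divide_inverse mult.commute)
  then have "(\<lambda>k. d * ((c ^ k / of_nat (fact k) + (- c) ^ k / of_nat (fact k)) / 2) +
             g * ((c ^ k / of_nat (fact k) - (- c) ^ k / of_nat (fact k)) / 2)) sums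
        (d * ((exp c + exp (- c)) / 2) + g * ((exp c - exp (- c)) / 2))"
    by (intro sums_add sums_mult sums_divide sums_diff)
  moreover have "d * ((c ^ k / of_nat (fact k) + (- c) ^ k / of_nat (fact k)) / 2) +
             g * ((c ^ k / of_nat (fact k) - (- c) ^ k / of_nat (fact k)) / 2)
       = c ^ k * (if even k then d else g) / of_nat (fact k)" for k
    by (cases "even k") (auto simp: field_simps)
  ultimately show ?thesis by simp
qed

lemma mat_exp_involution:
  fixes A :: "complex mat"
  assumes A: "A \<in> carrier_mat n n" and AA: "A * A = 1\<^sub>m n"
  shows "mat_exp ((- \<i> * of_real t) \<cdot>\<^sub>m A) = of_real (cos t) \<cdot>\<^sub>m 1\<^sub>m n + (- \<i> * of_real (sin t)) \<cdot>\<^sub>m A"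
proof (rule eq_matI)
  fix i j assume "i < dim_row (of_real (cos t) \<cdot>\<^sub>m 1\<^sub>m n + (- \<i> * of_real (sin t)) \<cdot>\<^sub>m A)"
    "j < dim_col (of_real (cos t) \<cdot>\<^sub>m 1\<^sub>m n + (- \<i> * of_real (sin t)) \<cdot>\<^sub>m A)"
  then have i: "i < n" and j: "j < n" using A by auto
  define c where "c = - \<i> * complex_of_real t"
  have cos: "(exp c + exp (- c)) / 2 = of_real (cos t)"
    unfolding c_def using cos_exp_eq[of "of_real t"] by (simp add: cos_of_real mult.commute)
  have sin: "(exp c - exp (- c)) / 2 = - \<i> * of_real (sin t)"
    unfolding c_def using sin_exp_eq[of "of_real t"] by (simp add: sin_of_real field_simps)
  have "(\<lambda>k. ((c \<cdot>\<^sub>m A) ^\<^sub>m k) $$ (i,j) / of_nat (fact k)) sums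
      ((if i = j then 1 else 0) * ((exp c + exp (- c)) / 2) + A $$ (i,j) * ((exp c - exp (- c)) / 2))"
  proof -
    have "((c \<cdot>\<^sub>m A) ^\<^sub>m k) $$ (i,j) = c ^ k * (if even k then (if i = j then 1 else 0) else A $$ (i,j))" for k
      using i j A by (simp add: power_smult_involution[OF A AA])
    then show ?thesis by (simp only: exp_series_even_odd)
  qed
  then show "mat_exp ((- \<i> * of_real t) \<cdot>\<^sub>m A) $$ (i, j) =
     (of_real (cos t) \<cdot>\<^sub>m 1\<^sub>m n + (- \<i> * of_real (sin t)) \<cdot>\<^sub>m A) $$ (i, j)"
    using i j A unfolding cos sin by (auto simp: mat_exp_def c_def sums_iff mult.commute)
qed (use A in \<open>auto simp: mat_exp_def\<close>)

definition qubit_rotation :: "complex mat \<Rightarrow> real \<Rightarrow> complex mat" where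
  "qubit_rotation h t = of_real (cos t) \<cdot>\<^sub>m 1\<^sub>m 2 + (- \<i> * of_real (sin t)) \<cdot>\<^sub>m h"

lemma qubit_rotation_carrier_mat[simp]: "h \<in> carrier_mat 2 2 \<Longrightarrow> qubit_rotation h t \<in> carrier_mat 2 2"
  by (simp add: qubit_rotation_def)

lemma mat_exp_local_op:
  assumes "1 \<le> l" "l \<le> p" "h l \<in> carrier_mat 2 2" "h l * h l = 1\<^sub>m 2"
  shows "mat_exp ((- \<i> * of_real t) \<cdot>\<^sub>m local_op p h l) =
     kron (kron (1\<^sub>m (2^(l-1))) (qubit_rotation (h l) t)) (1\<^sub>m (2^(p-l)))"
proof -
  have "mat_exp ((- \<i> * of_real t) \<cdot>\<^sub>m local_op p h l) =
     of_real (cos t) \<cdot>\<^sub>m 1\<^sub>m (2^p) + (- \<i> * of_real (sin t)) \<cdot>\<^sub>m local_op p h l"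
    using assms by (intro mat_exp_involution local_op_carrier_mat local_op_square)
  also have "\<dots> = kron (kron (1\<^sub>m (2^(l-1))) (qubit_rotation (h l) t)) (1\<^sub>m (2^(p-l)))"
    unfolding one_mat_kron_slot[OF assms(1,2)] local_op_def qubit_rotation_def smult_kron_slot
    using assms by (subst add_kron_slot[where a = "2^(l-1)"]) auto
  finally show ?thesis .
qed

lemma mat_exp_local_op_mult_kron_upto:
  assumes "1 \<le> l" "l \<le> p" "h l \<in> carrier_mat 2 2" "h l * h l = 1\<^sub>m 2" "mat_family 2 X p"
  shows "mat_exp ((- \<i> * of_real t) \<cdot>\<^sub>m local_op p h l) * kron_upto X p =
     kron_upto (X(l := qubit_rotation (h l) t * X l)) p"
proof -
  have "mat_family 2 X (l - 1)" "mat_family 2 (\<lambda>j. X (l + j)) (p - l)" "X l \<in> carrier_mat 2 2"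
    using assms by (auto simp: mat_family_def)
  then show ?thesis
    unfolding mat_exp_local_op[of l p h t, OF assms(1-4)] kron_upto_eq_kron_slot[OF assms(1,2), of X]
      kron_upto_fun_upd[OF assms(1,2)]
    using assms kron_upto_carrier_mat by (intro mult_kron_slot_left) auto
qed

lemma qnn_U_local_op:
  assumes h: "\<forall>l\<in>{1..p}. h l \<in> carrier_mat 2 2 \<and> h l * h l = 1\<^sub>m 2"
  shows "qnn_U (2^p) (local_op p h) \<theta> p = kron_upto (\<lambda>j. qubit_rotation (h j) (\<theta> j)) p"
proof -
  have "k \<le> p \<Longrightarrow>
    qnn_U (2^p) (local_op p h) \<theta> k = kron_upto (\<lambda>j. if j \<le> k then qubit_rotation (h j) (\<theta> j) else 1\<^sub>m 2) p" for k
  proof (induction k)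
    case 0
    have "kron_upto (\<lambda>j. if j \<le> 0 then qubit_rotation (h j) (\<theta> j) else 1\<^sub>m 2) p = 1\<^sub>m (2^p)"
      by (rule kron_upto_one_mat) auto
    then show ?case by simp
  next
    case (Suc k)
    let ?X = "\<lambda>j. if j \<le> k then qubit_rotation (h j) (\<theta> j) else 1\<^sub>m 2"
    have "mat_family 2 ?X p" using h by (auto simp: mat_family_def)
    have "qnn_U (2^p) (local_op p h) \<theta> (Suc k) =
       mat_exp ((- \<i> * of_real (\<theta> (Suc k))) \<cdot>\<^sub>m local_op p h (Suc k)) * kron_upto ?X p"
      using Suc by simp
    also have "\<dots> = kron_upto (?X(Suc k := qubit_rotation (h (Suc k)) (\<theta> (Suc k)) * ?X (Suc k))) p"
      using Suc.prems h \<open>mat_family 2 ?X p\<close> by (intro mat_exp_local_op_mult_kron_upto) auto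
    also have "\<dots> = kron_upto (\<lambda>j. if j \<le> Suc k then qubit_rotation (h j) (\<theta> j) else 1\<^sub>m 2) p"
    proof (intro kron_upto_cong)
      have "h (Suc k) \<in> carrier_mat 2 2" using h Suc.prems by simp
      then show "(?X(Suc k := qubit_rotation (h (Suc k)) (\<theta> (Suc k)) * ?X (Suc k))) j =
        (if j \<le> Suc k then qubit_rotation (h j) (\<theta> j) else 1\<^sub>m 2)" for j
        by (auto simp: le_Suc_eq right_mult_one_mat[of _ 2 2])
    qed
    finally show ?case .
  qed
  then show ?thesis by (auto intro: kron_upto_cong)
qed

section \<open>Splitting an observable along a Hermitian involution\<close>

locale involution_observable = square_matrices n for n +
  fixes h m :: "complex mat"
  assumes h_carrier[simp]: "h \<in> carrier_mat n n" and m_carrier[simp]: "m \<in> carrier_mat n n"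
    and h_square[simp]: "h * h = 1\<^sub>m n" and adj_h[simp]: "adj h = h" and adj_m[simp]: "adj m = m"
begin

lemma dims[simp]: "dim_row h = n" "dim_col h = n" "dim_row m = n" "dim_col m = n"
  using h_carrier m_carrier by blast+

lemma h_h_mult[simp]: "X \<in> carrier_mat n n \<Longrightarrow> h * (h * X) = X"
  by (subst mult_assoc_square[symmetric]) auto

definition "m0 = Phi h 0 m"
definition "m1 = Phi h 1 m"
definition "m2 = Phi h 2 m"

lemma m0_eq: "m0 = (1/2) \<cdot>\<^sub>m (m + h * (m * h))"
  and m1_eq: "m1 = (1/2) \<cdot>\<^sub>m (m - h * (m * h))"
  and m2_eq: "m2 = (\<i>/2) \<cdot>\<^sub>m (h * m - m * h)"
  by (simp_all add: m0_def m1_def m2_def Phi_def)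

lemma m012_carrier[simp]: "m0 \<in> carrier_mat n n" "m1 \<in> carrier_mat n n" "m2 \<in> carrier_mat n n"
  by (auto simp: m0_eq m1_eq m2_eq)

lemma m012_dims[simp]:
  "dim_row m0 = n" "dim_col m0 = n" "dim_row m1 = n" "dim_col m1 = n" "dim_row m2 = n" "dim_col m2 = n"
  using m012_carrier by blast+

lemma Phi_h_m: "Phi h 0 m = m0" "Phi h 1 m = m1" "Phi h (Suc 0) m = m1" "x \<ge> 2 \<Longrightarrow> Phi h x m = m2"
  by (auto simp: m0_def m1_def m2_def Phi_def)

lemma m0_nonzero_iff: "m0 \<noteq> 0\<^sub>m n n \<longleftrightarrow> m + h * m * h \<noteq> 0\<^sub>m n n"
proof -
  have "m + h * m * h = 2 \<cdot>\<^sub>m m0" unfolding m0_eq by (simp, rule eq_square_matI, auto)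
  moreover have "2 \<cdot>\<^sub>m m0 = 0\<^sub>m n n \<longleftrightarrow> m0 = 0\<^sub>m n n"
    by (simp add: smult_mat_eq_zero_iff)
  ultimately show ?thesis by simp
qed

lemma m1_nonzero_iff: "m1 \<noteq> 0\<^sub>m n n \<longleftrightarrow> m - h * m * h \<noteq> 0\<^sub>m n n"
proof -
  have "m - h * m * h = 2 \<cdot>\<^sub>m m1" unfolding m1_eq by (simp, rule eq_square_matI, auto)
  moreover have "2 \<cdot>\<^sub>m m1 = 0\<^sub>m n n \<longleftrightarrow> m1 = 0\<^sub>m n n"
    by (simp add: smult_mat_eq_zero_iff)
  ultimately show ?thesis by simp
qed

lemma h_m0_comm: "h * m0 = m0 * h"
  unfolding m0_eq by (simp, rule eq_square_matI, auto simp: algebra_simps)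

lemma h_m1_anticomm: "h * m1 = - (m1 * h)"
  unfolding m1_eq by (simp, rule eq_square_matI, auto simp: algebra_simps)

lemma m2_eq_h_m1: "m2 = \<i> \<cdot>\<^sub>m (h * m1)"
  unfolding m1_eq m2_eq by (simp, rule eq_square_matI, auto simp: algebra_simps)

lemma adj_m012: "adj m0 = m0" "adj m1 = m1" "adj m2 = m2"
  by (auto simp: m0_eq m1_eq m2_eq adj_simps, (rule eq_square_matI, auto simp: algebra_simps)+)

lemma h_m2_anticomm: "h * m2 = - (m2 * h)"
  unfolding m2_eq by (simp, rule eq_square_matI, auto simp: algebra_simps)

lemma mtrace_zero_if_anticomm:
  assumes X: "X \<in> carrier_mat n n" and anti: "h * X = - (X * h)"
  shows "mtrace X = 0"
proof -
  have "mtrace X = mtrace (h * (h * X))" using X by simp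
  also have "\<dots> = mtrace ((h * X) * h)" using X by (intro mtrace_comm) auto
  also have "\<dots> = - mtrace X" using X anti by (simp add: mtrace_simps)
  finally show ?thesis by simp
qed

lemma mtrace_mult_zero_if_comm_anticomm:
  assumes A: "A \<in> carrier_mat n n" and B: "B \<in> carrier_mat n n"
    and comm: "h * A = A * h" and anti: "h * B = - (B * h)"
  shows "mtrace (A * B) = 0"
proof (rule mtrace_zero_if_anticomm)
  have "h * (A * B) = A * (h * B)" using A B comm by (simp flip: mult_assoc_square)
  also have "\<dots> = - (A * B * h)" using A B anti by simp
  finally show "h * (A * B) = - (A * B * h)" .
qed (use A B in simp)

lemma mtrace_m0_m1: "mtrace (m0 * m1) = 0"
  by (rule mtrace_mult_zero_if_comm_anticomm) (simp_all add: h_m0_comm h_m1_anticomm)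

lemma mtrace_m0_m2: "mtrace (m0 * m2) = 0"
  by (rule mtrace_mult_zero_if_comm_anticomm) (simp_all add: h_m0_comm h_m2_anticomm)

lemma mtrace_m1_m2: "mtrace (m1 * m2) = 0"
proof -
  have "mtrace (m1 * (h * m1)) = mtrace ((h * m1) * m1)" by (rule mtrace_comm) auto
  also have "\<dots> = - mtrace (m1 * (h * m1))" by (simp add: h_m1_anticomm mtrace_simps)
  finally have "mtrace (m1 * (h * m1)) = 0" by simp
  then show ?thesis unfolding m2_eq_h_m1 by (simp add: mtrace_simps)
qed

lemma mtrace_Phi_orthogonal:
  assumes "x \<le> 2" "y \<le> 2" "x \<noteq> y"
  shows "mtrace (Phi h x m * Phi h y m) = 0"
proof -
  have "mtrace (m1 * m0) = 0" "mtrace (m2 * m0) = 0" "mtrace (m2 * m1) = 0"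
    using mtrace_m0_m1 mtrace_m0_m2 mtrace_m1_m2 mtrace_comm[of m0 m1] mtrace_comm[of m0 m2] mtrace_comm[of m1 m2]
    by simp_all
  moreover have "x = 0 \<and> y = 1 \<or> x = 0 \<and> y = 2 \<or> x = 1 \<and> y = 2 \<or> x = 1 \<and> y = 0 \<or> x = 2 \<and> y = 0 \<or> x = 2 \<and> y = 1"
    using assms by auto
  ultimately show ?thesis using mtrace_m0_m1 mtrace_m0_m2 mtrace_m1_m2 by (auto simp: Phi_h_m)
qed

lemma mtrace_square_nonzero:
  "X \<in> carrier_mat n n \<Longrightarrow> adj X = X \<Longrightarrow> X \<noteq> 0\<^sub>m n n \<Longrightarrow> mtrace (X * X) \<noteq> 0"
  using Re_mtrace_mult_adj_self_pos[of X n n] by auto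

lemma m2_nonzero: assumes "m1 \<noteq> 0\<^sub>m n n" shows "m2 \<noteq> 0\<^sub>m n n"
proof
  assume "m2 = 0\<^sub>m n n"
  then have "(- \<i>) \<cdot>\<^sub>m (h * m2) = 0\<^sub>m n n" by simp
  moreover have "(- \<i>) \<cdot>\<^sub>m (h * m2) = m1"
    unfolding m2_eq_h_m1 by (simp, rule eq_square_matI, auto)
  ultimately show False using assms by simp
qed

lemma mtrace_Phi_square_nonzero:
  assumes "x \<le> 2" "m0 \<noteq> 0\<^sub>m n n" "m1 \<noteq> 0\<^sub>m n n"
  shows "mtrace (Phi h x m * Phi h x m) \<noteq> 0"
proof -
  have "x = 0 \<or> x = 1 \<or> x = 2" using assms by auto
  then show ?thesis
    using assms m2_nonzero mtrace_square_nonzero adj_m012 by (auto simp: Phi_h_m)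
qed

end

section \<open>Two-by-two matrices\<close>

lemma sum_lessThan_2: "(\<Sum>i<2. f i) = f 0 + f (1::nat)"
  by (simp add: numeral_2_eq_2)

lemma less_2_iff: "(i::nat) < 2 \<longleftrightarrow> i = 0 \<or> i = 1"
  by auto

lemma mtrace_2: "X \<in> carrier_mat 2 2 \<Longrightarrow> mtrace X = X $$ (0,0) + X $$ (1,1)"
  by (simp add: mtrace_def sum_lessThan_2)

lemma index_mult_mat_2:
  "X \<in> carrier_mat 2 2 \<Longrightarrow> Y \<in> carrier_mat 2 2 \<Longrightarrow> i < 2 \<Longrightarrow> j < 2 \<Longrightarrow>
   (X * Y) $$ (i,j) = X $$ (i,0) * Y $$ (0,j) + X $$ (i,1) * Y $$ (1,j)"
  by (simp add: index_mult_mat_sum sum_lessThan_2)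

text \<open>The polarised Cayley--Hamilton identity.\<close>

lemma anticommutator_2x2:
  fixes X Y :: "complex mat"
  assumes X: "X \<in> carrier_mat 2 2" and Y: "Y \<in> carrier_mat 2 2"
  shows "X * Y + Y * X =
    mtrace X \<cdot>\<^sub>m Y + mtrace Y \<cdot>\<^sub>m X + (mtrace (X * Y) - mtrace X * mtrace Y) \<cdot>\<^sub>m 1\<^sub>m 2"
  by (rule eq_matI) (use X Y in \<open>auto simp: less_2_iff mtrace_2 index_mult_mat_2 algebra_simps\<close>)

lemma square_traceless_2x2:
  fixes X :: "complex mat"
  assumes X: "X \<in> carrier_mat 2 2" and tr: "mtrace X = 0"
  shows "X * X = (mtrace (X * X) / 2) \<cdot>\<^sub>m 1\<^sub>m 2"
proof (rule eq_matI)
  fix i j assume "i < dim_row ((mtrace (X * X) / 2) \<cdot>\<^sub>m 1\<^sub>m 2)" "j < dim_col ((mtrace (X * X) / 2) \<cdot>\<^sub>m 1\<^sub>m 2)"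
  then have ij: "i < 2" "j < 2" by auto
  have "(X * X + X * X) $$ (i,j) = ((mtrace (X * X)) \<cdot>\<^sub>m 1\<^sub>m 2) $$ (i,j)"
    using anticommutator_2x2[OF X X] tr ij X by simp
  then show "(X * X) $$ (i, j) = ((mtrace (X * X) / 2) \<cdot>\<^sub>m 1\<^sub>m 2) $$ (i, j)"
    using ij X by (auto simp: field_simps)
qed (use X in auto)

lemma involution_2x2_scalar:
  fixes X :: "complex mat"
  assumes X: "X \<in> carrier_mat 2 2" and XX: "X * X = 1\<^sub>m 2" and tr: "mtrace X \<noteq> 0"
  shows "X = (mtrace X / 2) \<cdot>\<^sub>m 1\<^sub>m 2"
proof (rule eq_matI)
  fix i j assume "i < dim_row ((mtrace X / 2) \<cdot>\<^sub>m 1\<^sub>m (2::nat))" "j < dim_col ((mtrace X / 2) \<cdot>\<^sub>m 1\<^sub>m (2::nat))"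
  then have ij: "i < 2" "j < 2" by auto
  have "(X * X + X * X) $$ (i,j) =
    (mtrace X \<cdot>\<^sub>m X + mtrace X \<cdot>\<^sub>m X + (mtrace (X * X) - mtrace X * mtrace X) \<cdot>\<^sub>m 1\<^sub>m 2) $$ (i,j)"
    by (simp only: anticommutator_2x2[OF X X])
  then have "2 * mtrace X * X $$ (i,j) = mtrace X * mtrace X * (if i = j then 1 else 0)"
    using ij X XX by (auto simp: algebra_simps)
  then show "X $$ (i,j) = ((mtrace X / 2) \<cdot>\<^sub>m 1\<^sub>m 2) $$ (i,j)"
    using ij tr by (auto simp: field_simps split: if_splits)
qed (use X in auto)

text \<open>A pure qubit state: the projector onto the \<open>+1\<close> eigenspace of \<open>Y\<close>.\<close>

definition eigenprojector :: "complex mat \<Rightarrow> complex mat" where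
  "eigenprojector Y = (1/2) \<cdot>\<^sub>m (1\<^sub>m 2 + Y)"

locale qubit_reflection =
  fixes Y :: "complex mat"
  assumes Y_carrier[simp]: "Y \<in> carrier_mat 2 2" and Y_square: "Y * Y = 1\<^sub>m 2"
    and adj_Y: "adj Y = Y" and mtrace_Y: "mtrace Y = 0"
begin

interpretation square_matrices 2 .

lemma dim_Y[simp]: "dim_row Y = 2" "dim_col Y = 2"
  using Y_carrier by blast+

lemma eigenprojector_carrier[simp]: "eigenprojector Y \<in> carrier_mat 2 2"
  by (simp add: eigenprojector_def)

lemma adj_eigenprojector: "adj (eigenprojector Y) = eigenprojector Y"
  by (simp add: eigenprojector_def adj_simps adj_Y)

lemma eigenprojector_idem: "eigenprojector Y * eigenprojector Y = eigenprojector Y"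
  unfolding eigenprojector_def by (simp add: Y_square, rule eq_square_matI, auto simp: field_simps)

lemma mtrace_eigenprojector: "mtrace (eigenprojector Y) = 1"
  by (simp add: eigenprojector_def mtrace_simps mtrace_Y)

lemma mtrace_eigenprojector_mult:
  "Z \<in> carrier_mat 2 2 \<Longrightarrow> mtrace (eigenprojector Y * Z) = mtrace Z / 2 + mtrace (Y * Z) / 2"
  by (simp add: eigenprojector_def mtrace_simps)

end

locale qubit_observable = involution_observable 2 h m for h m +
  assumes m0_nonzero: "m0 \<noteq> 0\<^sub>m 2 2" and m1_nonzero: "m1 \<noteq> 0\<^sub>m 2 2"
begin

lemma mtrace_h: "mtrace h = 0"
proof (rule ccontr)
  define t where "t = mtrace h"
  assume "mtrace h \<noteq> 0"
  then have h: "h = (t/2) \<cdot>\<^sub>m 1\<^sub>m 2"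
    unfolding t_def by (intro involution_2x2_scalar) auto
  have "(t/2) * (t/2) = ((t/2) \<cdot>\<^sub>m 1\<^sub>m 2 * ((t/2) \<cdot>\<^sub>m 1\<^sub>m (2::nat))) $$ (0,0)"
    by (simp add: index_mult_mat_2)
  also have "\<dots> = 1" by (simp flip: h)
  finally have "t * t = 4" by (simp add: field_simps)
  then have "m1 = 0\<^sub>m 2 2"
    unfolding m1_eq by (subst (1 2) h) (rule eq_square_matI, auto simp: index_mult_mat_2 less_2_iff)
  then show False using m1_nonzero by simp
qed

lemma mtrace_m1: "mtrace m1 = 0"
  by (rule mtrace_zero_if_anticomm) (simp_all add: h_m1_anticomm)

lemma mtrace_m2: "mtrace m2 = 0"
  by (rule mtrace_zero_if_anticomm) (simp_all add: h_m2_anticomm)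

lemma mtrace_h_m1: "mtrace (h * m1) = 0"
  unfolding m2_eq_h_m1 using mtrace_m2 by (simp add: m2_eq_h_m1 mtrace_simps)

lemma mtrace_h_m2: "mtrace (h * m2) = 0"
  unfolding m2_eq_h_m1 using mtrace_m1 by (simp add: mtrace_simps)

lemma mtrace_m0_real: "of_real (Re (mtrace m0)) = mtrace m0"
  using mtrace_adj[of m0 2] adj_m012 by (simp add: Reals_cnj_iff)

lemma mtrace_h_m0_real: "of_real (Re (mtrace (h * m0))) = mtrace (h * m0)"
  by (rule mtrace_mult_self_adjoint_real[of _ 2]) (simp_all add: adj_m012)

definition "lam = sqrt (Re (mtrace (m1 * m1)) / 2)"

lemma lam_pos: "lam > 0"
  using Re_mtrace_mult_adj_self_pos[of m1 2 2] m1_nonzero adj_m012 by (simp add: lam_def)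

lemma mtrace_m1_m1: "mtrace (m1 * m1) = of_real (2 * lam\<^sup>2)"
  using mtrace_mult_self_adjoint_real[of m1 2 m1] Re_mtrace_mult_adj_self_pos[of m1 2 2] m1_nonzero adj_m012
  by (simp add: lam_def)

lemma m1_m1: "m1 * m1 = of_real (lam\<^sup>2) \<cdot>\<^sub>m 1\<^sub>m 2"
  using square_traceless_2x2[of m1] mtrace_m1 mtrace_m1_m1 by simp

lemma m2_m2: "m2 * m2 = m1 * m1"
  by (simp add: m1_eq m2_eq, rule eq_square_matI, auto simp: algebra_simps)

definition "r1 = of_real (1 / lam) \<cdot>\<^sub>m m1"
definition "r2 = of_real (1 / lam) \<cdot>\<^sub>m m2"

lemma r12_carrier[simp]: "r1 \<in> carrier_mat 2 2" "r2 \<in> carrier_mat 2 2"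
  by (auto simp: r1_def r2_def)

lemma r12_square: "r1 * r1 = 1\<^sub>m 2" "r2 * r2 = 1\<^sub>m 2"
proof -
  have l: "of_real (1 / lam) * of_real (1 / lam) * of_real (lam\<^sup>2) = (1 :: complex)"
    using lam_pos by (simp add: field_simps power2_eq_square)
  show "r1 * r1 = 1\<^sub>m 2" unfolding r1_def using l
    by (simp add: m1_m1) (rule eq_square_matI, auto simp: mult.assoc[symmetric])
  show "r2 * r2 = 1\<^sub>m 2" unfolding r2_def using l
    by (simp add: m2_m2 m1_m1) (rule eq_square_matI, auto simp: mult.assoc[symmetric])
qed

lemma r12_dims[simp]: "dim_row r1 = 2" "dim_col r1 = 2" "dim_row r2 = 2" "dim_col r2 = 2"
  using r12_carrier by blast+

lemma adj_r12: "adj r1 = r1" "adj r2 = r2"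
  by (auto simp: r1_def r2_def adj_simps adj_m012)

lemma h_r1_anticomm: "h * r1 = - (r1 * h)"
  unfolding r1_def by (simp add: m1_eq, rule eq_square_matI, auto simp: algebra_simps)

lemma mtrace_r12:
  "mtrace r1 = 0" "mtrace r2 = 0" "mtrace (h * r1) = 0" "mtrace (h * r2) = 0"
  "mtrace (r1 * m0) = 0" "mtrace (r1 * m1) = of_real (2 * lam)" "mtrace (r1 * m2) = 0"
  "mtrace (r2 * m0) = 0" "mtrace (r2 * m1) = 0" "mtrace (r2 * m2) = of_real (2 * lam)"
  "mtrace (r1 * r1) = 2" "mtrace (r2 * r2) = 2" "mtrace (r1 * r2) = 0" "mtrace (r2 * r1) = 0"
proof -
  have "mtrace (m1 * m0) = 0" "mtrace (m2 * m0) = 0" "mtrace (m2 * m1) = 0"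
    using mtrace_m0_m1 mtrace_m0_m2 mtrace_m1_m2 mtrace_comm[of m0 m1] mtrace_comm[of m0 m2] mtrace_comm[of m1 m2]
    by simp_all
  moreover have "of_real (1 / lam) * of_real (2 * lam\<^sup>2) = (of_real (2 * lam) :: complex)"
    using lam_pos by (simp add: field_simps power2_eq_square)
  ultimately show "mtrace r1 = 0" "mtrace r2 = 0" "mtrace (h * r1) = 0" "mtrace (h * r2) = 0"
    "mtrace (r1 * m0) = 0" "mtrace (r1 * m1) = of_real (2 * lam)" "mtrace (r1 * m2) = 0"
    "mtrace (r2 * m0) = 0" "mtrace (r2 * m1) = 0" "mtrace (r2 * m2) = of_real (2 * lam)"
    "mtrace (r1 * r2) = 0" "mtrace (r2 * r1) = 0"
    unfolding r1_def r2_def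
    using mtrace_m1 mtrace_m2 mtrace_h_m1 mtrace_h_m2 mtrace_m1_m2 mtrace_m1_m1 m2_m2
    by (simp_all add: mtrace_simps)
  show "mtrace (r1 * r1) = 2" "mtrace (r2 * r2) = 2" by (simp_all add: r12_square)
qed

lemma conj_qubit_rotation:
  "adj (qubit_rotation h t) * (m * qubit_rotation h t) =
   m0 + of_real (cos (2*t)) \<cdot>\<^sub>m m1 + of_real (sin (2*t)) \<cdot>\<^sub>m m2"
proof -
  have adj: "adj (qubit_rotation h t) = of_real (cos t) \<cdot>\<^sub>m 1\<^sub>m 2 + (\<i> * of_real (sin t)) \<cdot>\<^sub>m h"
    by (simp add: qubit_rotation_def adj_simps)
  have double: "co * (co * x + \<i> * si * y) - \<i> * si * (co * z + \<i> * si * w)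
      = (x + w) / 2 + (co\<^sup>2 - si\<^sup>2) * (x - w) / 2 + si * (co * (\<i> * (y - z)))"
    if "co\<^sup>2 + si\<^sup>2 = 1" for co si x y z w :: complex
  proof -
    have si2: "si\<^sup>2 = 1 - co\<^sup>2" using that by (simp add: algebra_simps)
    have "co * (co * x + \<i> * si * y) - \<i> * si * (co * z + \<i> * si * w)
        = co\<^sup>2 * x + si\<^sup>2 * w + \<i> * si * co * (y - z)"
      by (simp add: algebra_simps power2_eq_square)
    also have "\<dots> = (x + w) / 2 + (co\<^sup>2 - si\<^sup>2) * (x - w) / 2 + si * (co * (\<i> * (y - z)))"
      unfolding si2 by (simp add: field_simps power2_eq_square)
    finally show ?thesis .
  qed
  have cos2: "(of_real (cos (2*t)) :: complex) = (of_real (cos t))\<^sup>2 - (of_real (sin t))\<^sup>2"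
    and sin2: "(of_real (sin (2*t)) :: complex) = 2 * of_real (sin t) * of_real (cos t)"
    and pyth: "(of_real (cos t))\<^sup>2 + (of_real (sin t))\<^sup>2 = (1 :: complex)"
    by (simp_all add: cos_double sin_double flip: of_real_power of_real_add)
  show ?thesis
    unfolding adj unfolding qubit_rotation_def m0_eq m1_eq m2_eq cos2 sin2
    by (simp, rule eq_square_matI, simp_all, rule double[OF pyth])
qed

lemma mtrace_conj_qubit_rotation:
  assumes "\<sigma> \<in> carrier_mat 2 2"
  shows "mtrace (qubit_rotation h t * \<sigma> * adj (qubit_rotation h t) * m) =
    mtrace (\<sigma> * m0) + of_real (cos (2*t)) * mtrace (\<sigma> * m1) + of_real (sin (2*t)) * mtrace (\<sigma> * m2)"
proof -
  have "mtrace (qubit_rotation h t * \<sigma> * adj (qubit_rotation h t) * m)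
      = mtrace (qubit_rotation h t * (\<sigma> * (adj (qubit_rotation h t) * m)))"
    using assms by simp
  also have "\<dots> = mtrace ((\<sigma> * (adj (qubit_rotation h t) * m)) * qubit_rotation h t)"
    using assms by (intro mtrace_comm) auto
  also have "\<dots> = mtrace (\<sigma> * (adj (qubit_rotation h t) * (m * qubit_rotation h t)))"
    using assms by simp
  finally show ?thesis
    using assms by (simp add: conj_qubit_rotation mtrace_simps)
qed

lemma mtrace_conj_eigenprojector:
  assumes "qubit_reflection Y"
  shows "mtrace (qubit_rotation h t * eigenprojector Y * adj (qubit_rotation h t) * m) =
    mtrace m0 / 2 + mtrace (Y * m0) / 2
    + of_real (cos (2*t)) * (mtrace (Y * m1) / 2) + of_real (sin (2*t)) * (mtrace (Y * m2) / 2)"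
proof -
  interpret qubit_reflection Y by fact
  show ?thesis
    unfolding mtrace_conj_qubit_rotation[OF eigenprojector_carrier]
    by (simp add: mtrace_eigenprojector_mult mtrace_m1 mtrace_m2)
qed

definition "tr0 = Re (mtrace m0)"
definition "trh0 = Re (mtrace (h * m0))"

text \<open>Bloch directions of the data states on this qubit.\<close>

definition "dir1 = (3/5) \<cdot>\<^sub>m r1 + (4/5) \<cdot>\<^sub>m h"
definition "dir_idle e = of_real e \<cdot>\<^sub>m h"

lemma qubit_reflection_dir1: "qubit_reflection dir1"
proof
  show "dir1 \<in> carrier_mat 2 2" by (simp add: dir1_def)
  show "dir1 * dir1 = 1\<^sub>m 2" unfolding dir1_def
    by (simp add: h_r1_anticomm r12_square, rule eq_square_matI, auto simp: algebra_simps)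
  show "adj dir1 = dir1" by (simp add: dir1_def adj_simps adj_r12)
  show "mtrace dir1 = 0" by (simp add: dir1_def mtrace_simps mtrace_r12 mtrace_h)
qed

lemma qubit_reflection_r2: "qubit_reflection r2"
  using r12_square adj_r12 mtrace_r12 by unfold_locales auto

lemma qubit_reflection_dir_idle: "e \<in> {1, -1} \<Longrightarrow> qubit_reflection (dir_idle e)"
  by unfold_locales (auto simp: dir_idle_def adj_simps mtrace_simps mtrace_h)

lemma mtrace_conj_dir1:
  "mtrace (qubit_rotation h t * eigenprojector dir1 * adj (qubit_rotation h t) * m) =
   of_real (tr0 / 2 + 2/5 * trh0 + 3/5 * lam * cos (2 * t))"
proof -
  have e: "mtrace (dir1 * m0) = (4/5) * of_real trh0" "mtrace (dir1 * m1) = (6/5) * of_real lam"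
    "mtrace (dir1 * m2) = 0"
    unfolding dir1_def trh0_def using mtrace_r12 mtrace_h_m1 mtrace_h_m2 mtrace_h_m0_real
    by (simp_all add: mtrace_simps)
  show ?thesis
    unfolding mtrace_conj_eigenprojector[OF qubit_reflection_dir1] e tr0_def
    by (subst mtrace_m0_real[symmetric]) (simp add: field_simps)
qed

lemma mtrace_conj_r2:
  "mtrace (qubit_rotation h t * eigenprojector r2 * adj (qubit_rotation h t) * m) =
   of_real (tr0 / 2 + lam * sin (2 * t))"
  unfolding mtrace_conj_eigenprojector[OF qubit_reflection_r2] tr0_def mtrace_r12
  by (subst mtrace_m0_real[symmetric]) (simp add: field_simps)

lemma mtrace_conj_dir_idle:
  assumes "e \<in> {1, -1}"
  shows "mtrace (qubit_rotation h t * eigenprojector (dir_idle e) * adj (qubit_rotation h t) * m) =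
    of_real (tr0 / 2 + e / 2 * trh0)"
proof -
  have e: "mtrace (dir_idle e * m0) = of_real e * of_real trh0" "mtrace (dir_idle e * m1) = 0"
    "mtrace (dir_idle e * m2) = 0"
    unfolding dir_idle_def trh0_def using mtrace_h_m1 mtrace_h_m2 mtrace_h_m0_real
    by (simp_all add: mtrace_simps)
  show ?thesis
    unfolding e mtrace_conj_eigenprojector[OF qubit_reflection_dir_idle[OF assms]] tr0_def
    by (subst mtrace_m0_real[symmetric]) (simp add: field_simps)
qed

text \<open>If both eigenprojectors of \<open>h\<close> had zero expectation, \<open>m0\<close> would be traceless and
  anticommute with \<open>h\<close>, hence vanish.\<close>

lemma exists_idle_sign: "\<exists>e\<in>{1, -1}. tr0 / 2 + e / 2 * trh0 \<noteq> 0"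
proof (rule ccontr)
  assume "\<not> ?thesis"
  then have "tr0 = 0" "trh0 = 0" by auto
  then have tr: "mtrace m0 = 0" "mtrace (h * m0) = 0"
    using mtrace_m0_real mtrace_h_m0_real by (simp_all add: tr0_def trh0_def)
  have "h * m0 + m0 * h = 0 \<cdot>\<^sub>m m0 + 0 \<cdot>\<^sub>m h + 0 \<cdot>\<^sub>m 1\<^sub>m 2"
    using anticommutator_2x2[of h m0] by (simp add: tr mtrace_h)
  also have "\<dots> = 0\<^sub>m 2 2" by (rule eq_square_matI) auto
  finally have "h * m0 + m0 * h = 0\<^sub>m 2 2" .
  then have "(1/2) \<cdot>\<^sub>m (h * m0 + m0 * h) = 0\<^sub>m 2 2" by simp
  moreover have "(1/2) \<cdot>\<^sub>m (h * m0 + m0 * h) = h * m0"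
    by (simp add: h_m0_comm[symmetric], rule eq_square_matI, auto)
  ultimately have "h * (h * m0) = 0\<^sub>m 2 2" by simp
  then show False using m0_nonzero by simp
qed

lemma mtrace_eigenprojector_r12:
  "mtrace (eigenprojector dir1 * r1) = 3/5" "mtrace (eigenprojector dir1 * r2) = 0"
  "mtrace (eigenprojector r2 * r1) = 0" "mtrace (eigenprojector r2 * r2) = 1"
  "e \<in> {1, -1} \<Longrightarrow> mtrace (eigenprojector (dir_idle e) * r1) = 0"
  "e \<in> {1, -1} \<Longrightarrow> mtrace (eigenprojector (dir_idle e) * r2) = 0"
  using qubit_reflection.mtrace_eigenprojector_mult[OF qubit_reflection_dir1]
    qubit_reflection.mtrace_eigenprojector_mult[OF qubit_reflection_r2]
    qubit_reflection.mtrace_eigenprojector_mult[OF qubit_reflection_dir_idle]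
  by (simp_all add: dir1_def dir_idle_def mtrace_simps mtrace_r12)

end

section \<open>Local minima of separable functions\<close>

lemma local_min_param_separable:
  assumes L: "\<And>\<theta>. L \<theta> = c * (\<Sum>l=1..p. g l (\<theta> l))" and c: "c \<ge> 0" and r: "r > 0"
    and min: "\<And>l s. l \<in> {1..p} \<Longrightarrow> \<bar>s - \<theta> l\<bar> < r \<Longrightarrow> g l (\<theta> l) \<le> g l s"
  shows "local_min_param p L \<theta>"
  unfolding local_min_param_def
proof (intro exI[of _ r] conjI allI impI)
  fix \<theta>' assume "\<forall>l\<in>{1..p}. \<bar>\<theta>' l - \<theta> l\<bar> < r"
  then have "(\<Sum>l=1..p. g l (\<theta> l)) \<le> (\<Sum>l=1..p. g l (\<theta>' l))"
    by (intro sum_mono min) auto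
  then show "L \<theta> \<le> L \<theta>'" unfolding L using c by (rule mult_left_mono)
qed (fact r)

lemma spurious_local_min_if_less:
  assumes "local_min_param p L \<theta>" "bdd_below (range L)" "L \<theta>' < L \<theta>"
  shows "spurious_local_min p L \<theta>"
  using assms cINF_lower[OF assms(2), of \<theta>'] by (auto simp: spurious_local_min_def)

text \<open>The loss contributed by one qubit. As a function of \<open>c = cos (2 t)\<close> it equals
  \<open>289/225 - 16/25 (c\<^sup>2 + c)\<close>, which is concave, so both endpoints \<open>c = 1\<close> and \<open>c = -1\<close>
  (i.e.\ \<open>t = 0\<close> and \<open>t = pi/2\<close>) are local minima, with different values.\<close>

definition qubit_landscape :: "real \<Rightarrow> real" where
  "qubit_landscape t = (3/5 * cos (2 * t) - 8/15)\<^sup>2 + (sin (2 * t))\<^sup>2"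

lemma qubit_landscape_eq: "qubit_landscape t = 289/225 - 16/25 * ((cos (2 * t))\<^sup>2 + cos (2 * t))"
  unfolding qubit_landscape_def sin_squared_eq by (simp add: algebra_simps power2_eq_square)

lemma qubit_landscape_min: "qubit_landscape 0 \<le> qubit_landscape t"
proof -
  have "0 \<le> (1 - cos (2 * t)) * (2 + cos (2 * t))"
    using cos_le_one[of "2 * t"] cos_ge_minus_one[of "2 * t"] by (intro mult_nonneg_nonneg) linarith+
  then show ?thesis unfolding qubit_landscape_eq by (simp add: algebra_simps power2_eq_square)
qed

lemma qubit_landscape_local_min_pi_half:
  assumes "\<bar>t - pi/2\<bar> < pi/4"
  shows "qubit_landscape (pi/2) \<le> qubit_landscape t"
proof -
  have "- (pi/2) \<le> 2 * t - pi" "2 * t - pi \<le> pi/2"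
    using assms unfolding abs_less_iff by linarith+
  then have "0 \<le> cos (2 * t - pi)" by (rule cos_ge_zero)
  then have "cos (2 * t) \<le> 0" by (simp add: cos_diff)
  then have "0 \<le> (- cos (2 * t)) * (1 + cos (2 * t))"
    using cos_ge_minus_one[of "2 * t"] by (intro mult_nonneg_nonneg) linarith+
  then show ?thesis unfolding qubit_landscape_eq by (simp add: algebra_simps power2_eq_square)
qed

lemma qubit_landscape_min_less_pi_half: "qubit_landscape 0 < qubit_landscape (pi/2)"
  by (simp add: qubit_landscape_eq)

definition corner :: "nat set \<Rightarrow> nat \<Rightarrow> real" where
  "corner A l = (if l \<in> A then pi/2 else 0)"

lemma corner_period_box: "A \<subseteq> {1..p} \<Longrightarrow> corner A \<in> period_box p"
  by (auto simp: period_box_def corner_def)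

lemma inj_corner: "inj corner"
proof (rule injI)
  fix A B assume "corner A = corner B"
  moreover have "A = {l. corner A l \<noteq> 0}" "B = {l. corner B l \<noteq> 0}" by (auto simp: corner_def)
  ultimately show "A = B" by metis
qed

lemma card_nonempty_corners: "card (corner ` (Pow {1..p} - {{}})) = 2 ^ p - 1"
  using inj_corner by (simp add: card_image inj_on_subset card_Diff_singleton card_Pow)

section \<open>Linear independence\<close>

lemma coeff_zero_if_mtrace_orthogonal:
  fixes Q :: "'i \<Rightarrow> complex mat" and c :: "'i \<Rightarrow> complex"
  assumes I: "finite I" "\<eta> \<in> I" and Q: "\<And>\<xi>. \<xi> \<in> I \<Longrightarrow> Q \<xi> \<in> carrier_mat N N"
    and orth: "\<And>\<xi>. \<xi> \<in> I \<Longrightarrow> \<xi> \<noteq> \<eta> \<Longrightarrow> mtrace (Q \<xi> * Q \<eta>) = 0"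
    and diag: "mtrace (Q \<eta> * Q \<eta>) \<noteq> 0"
    and comb: "\<And>i j. i < N \<Longrightarrow> j < N \<Longrightarrow> (\<Sum>\<xi>\<in>I. c \<xi> * Q \<xi> $$ (i,j)) = 0"
  shows "c \<eta> = 0"
proof -
  have "c \<eta> * mtrace (Q \<eta> * Q \<eta>) = (\<Sum>\<xi>\<in>I. c \<xi> * mtrace (Q \<xi> * Q \<eta>))"
    using I orth by (simp add: sum.remove[of I \<eta>])
  also have "\<dots> = (\<Sum>\<xi>\<in>I. c \<xi> * (\<Sum>i<N. \<Sum>k<N. Q \<xi> $$ (i,k) * Q \<eta> $$ (k,i)))"
  proof (intro sum.cong refl arg_cong[where f = "(*) (c _)"])
    fix \<xi> assume "\<xi> \<in> I"
    then have "Q \<xi> \<in> carrier_mat N N" "Q \<eta> \<in> carrier_mat N N" using Q I by auto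
    then show "mtrace (Q \<xi> * Q \<eta>) = (\<Sum>i<N. \<Sum>k<N. Q \<xi> $$ (i,k) * Q \<eta> $$ (k,i))"
      by (simp add: mtrace_def index_mult_mat_sum)
  qed
  also have "\<dots> = (\<Sum>i<N. \<Sum>k<N. (\<Sum>\<xi>\<in>I. c \<xi> * Q \<xi> $$ (i,k)) * Q \<eta> $$ (k,i))"
    by (simp add: sum_distrib_left sum_distrib_right mult.assoc sum.swap[of _ I])
  also have "\<dots> = 0" using comb by simp
  finally show ?thesis using diag by simp
qed

lemma finite_xi_set: "finite (xi_set p)"
proof (rule finite_subset)
  show "xi_set p \<subseteq> (\<lambda>f l. if l \<in> {1..p} then f l else 0) ` ({1..p} \<rightarrow>\<^sub>E {0..2::nat})"
  proof
    fix \<xi> assume \<xi>: "\<xi> \<in> xi_set p"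
    then have "\<xi> = (\<lambda>l. if l \<in> {1..p} then restrict \<xi> {1..p} l else 0)"
      by (auto simp: xi_set_def)
    moreover have "restrict \<xi> {1..p} \<in> {1..p} \<rightarrow>\<^sub>E {0..2}"
      using \<xi> by (auto simp: xi_set_def)
    ultimately show "\<xi> \<in> (\<lambda>f l. if l \<in> {1..p} then f l else 0) ` ({1..p} \<rightarrow>\<^sub>E {0..2})"
      by blast
  qed
qed (auto intro: finite_PiE)

locale qnn_product =
  fixes p :: nat and h m :: "nat \<Rightarrow> complex mat"
  assumes p_pos: "p \<ge> 1"
    and h: "\<forall>l\<in>{1..p}. h l \<in> carrier_mat 2 2 \<and> hermitian (h l) \<and> h l * h l = 1\<^sub>m 2"
    and m: "\<forall>l\<in>{1..p}. m l \<in> carrier_mat 2 2 \<and> hermitian (m l)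
           \<and> m l + h l * m l * h l \<noteq> 0\<^sub>m 2 2 \<and> m l - h l * m l * h l \<noteq> 0\<^sub>m 2 2"
begin

lemma qubit_observable_at: "l \<in> {1..p} \<Longrightarrow> qubit_observable (h l) (m l)"
proof -
  assume l: "l \<in> {1..p}"
  then interpret involution_observable 2 "h l" "m l"
    using h m by unfold_locales (auto simp: hermitian_def)
  show ?thesis
  proof unfold_locales
    show "m0 \<noteq> 0\<^sub>m 2 2" unfolding m0_nonzero_iff using m l by blast
    show "m1 \<noteq> 0\<^sub>m 2 2" unfolding m1_nonzero_iff using m l by blast
  qed
qed

lemma h_carrier: "l \<in> {1..p} \<Longrightarrow> h l \<in> carrier_mat 2 2"
  and m_carrier: "l \<in> {1..p} \<Longrightarrow> m l \<in> carrier_mat 2 2"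
  using h m by auto

lemma mat_family_m: "mat_family 2 m p"
  using m by (auto simp: mat_family_def)

definition "Phi_product \<xi> = kron_upto (\<lambda>j. Phi (h j) (\<xi> j) (m j)) p"

lemma mat_family_Phi: "mat_family 2 (\<lambda>j. Phi (h j) (\<xi> j) (m j)) p"
  using h_carrier m_carrier by (auto simp: mat_family_def intro!: Phi_carrier_mat)

lemma Phi_seq_eq_Phi_product: "Phi_seq (local_op p h) \<xi> p (kron_upto m p) = Phi_product \<xi>"
  unfolding Phi_product_def using h mat_family_m by (subst Phi_seq_kron_upto) (auto intro!: kron_upto_cong)

lemma mtrace_Phi_product:
  "mtrace (Phi_product \<xi> * Phi_product \<zeta>) =
    (\<Prod>j=1..p. mtrace (Phi (h j) (\<xi> j) (m j) * Phi (h j) (\<zeta> j) (m j)))"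
  unfolding Phi_product_def kron_upto_mult[OF mat_family_Phi mat_family_Phi]
  by (rule mtrace_kron_upto[OF mat_family_mult[OF mat_family_Phi mat_family_Phi]])

lemma mtrace_Phi_product_orthogonal:
  assumes \<xi>: "\<xi> \<in> xi_set p" and \<eta>: "\<eta> \<in> xi_set p" and "\<xi> \<noteq> \<eta>"
  shows "mtrace (Phi_product \<xi> * Phi_product \<eta>) = 0"
proof -
  obtain l where ne: "\<xi> l \<noteq> \<eta> l" using \<open>\<xi> \<noteq> \<eta>\<close> by (metis ext)
  then have l: "l \<in> {1..p}" and "\<xi> l \<le> 2" "\<eta> l \<le> 2"
    using \<xi> \<eta> by (auto simp: xi_set_def)
  interpret qubit_observable "h l" "m l" by (rule qubit_observable_at[OF l])
  have "mtrace (Phi (h l) (\<xi> l) (m l) * Phi (h l) (\<eta> l) (m l)) = 0"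
    using ne \<open>\<xi> l \<le> 2\<close> \<open>\<eta> l \<le> 2\<close> by (intro mtrace_Phi_orthogonal)
  then show ?thesis unfolding mtrace_Phi_product using l by (intro prod_zero) auto
qed

lemma mtrace_Phi_product_square_nonzero:
  assumes \<eta>: "\<eta> \<in> xi_set p"
  shows "mtrace (Phi_product \<eta> * Phi_product \<eta>) \<noteq> 0"
proof -
  have "mtrace (Phi (h l) (\<eta> l) (m l) * Phi (h l) (\<eta> l) (m l)) \<noteq> 0" if l: "l \<in> {1..p}" for l
  proof -
    interpret qubit_observable "h l" "m l" by (rule qubit_observable_at[OF l])
    show ?thesis
      using \<eta> l m0_nonzero m1_nonzero by (intro mtrace_Phi_square_nonzero) (auto simp: xi_set_def)
  qed
  then show ?thesis unfolding mtrace_Phi_product by (subst prod_zero_iff) auto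
qed

lemma with_linear_independence: "with_linear_independence p (local_op p h) (kron_upto m p)"
  unfolding with_linear_independence_def Phi_seq_eq_Phi_product
proof (intro allI impI ballI)
  fix c :: "(nat \<Rightarrow> nat) \<Rightarrow> real" and \<eta>
  assume comb: "\<forall>i<dim_row (kron_upto m p). \<forall>j<dim_col (kron_upto m p).
       (\<Sum>\<xi>\<in>xi_set p. of_real (c \<xi>) * Phi_product \<xi> $$ (i, j)) = 0"
    and \<eta>: "\<eta> \<in> xi_set p"
  have "(of_real (c \<eta>) :: complex) = 0"
  proof (rule coeff_zero_if_mtrace_orthogonal[OF finite_xi_set \<eta>])
    show "Phi_product \<xi> \<in> carrier_mat (2^p) (2^p)" for \<xi>
      unfolding Phi_product_def by (rule kron_upto_carrier_mat[OF mat_family_Phi])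
    show "(\<Sum>\<xi>\<in>xi_set p. of_real (c \<xi>) * Phi_product \<xi> $$ (i, j)) = 0" if "i < 2^p" "j < 2^p" for i j
      using comb that kron_upto_carrier_mat[OF mat_family_m] by simp
  qed (use \<eta> mtrace_Phi_product_orthogonal mtrace_Phi_product_square_nonzero in auto)
  then show "c \<eta> = 0" by simp
qed

section \<open>The dataset\<close>

abbreviation "tr0_at l \<equiv> qubit_observable.tr0 (h l) (m l)"
abbreviation "trh0_at l \<equiv> qubit_observable.trh0 (h l) (m l)"
abbreviation "lam_at l \<equiv> qubit_observable.lam (h l) (m l)"

definition "idle_sign l = (SOME e. e \<in> {1, -1} \<and> tr0_at l / 2 + e / 2 * trh0_at l \<noteq> 0)"
definition "idle_expectation l = tr0_at l / 2 + idle_sign l / 2 * trh0_at l"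

lemma idle_sign_expectation:
  "l \<in> {1..p} \<Longrightarrow> idle_sign l \<in> {1, -1} \<and> idle_expectation l \<noteq> 0"
  unfolding idle_sign_def idle_expectation_def
  by (rule someI_ex) (use qubit_observable.exists_idle_sign[OF qubit_observable_at] in blast)

text \<open>Data state number \<open>k \<in> {1, 2}\<close> attached to qubit \<open>l\<close>: a product of pure states which on
  qubit \<open>l\<close> probes \<open>m1\<close> (\<open>k = 1\<close>) or \<open>m2\<close> (\<open>k = 2\<close>), and on every other qubit \<open>j\<close> is the
  eigenprojector of \<open>h j\<close>, whose expectation does not depend on \<open>\<theta> j\<close>.\<close>

definition data_factor :: "nat \<Rightarrow> nat \<Rightarrow> nat \<Rightarrow> complex mat" where "data_factor l k j =
  (if j = l then eigenprojector (if k = 1 then qubit_observable.dir1 (h l) (m l) else qubit_observable.r2 (h l) (m l))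
   else eigenprojector (qubit_observable.dir_idle (h j) (idle_sign j)))"

definition "data_state l k = kron_upto (data_factor l k) p"

definition "idle_product l = (\<Prod>j\<in>{1..p} - {l}. idle_expectation j)"

definition "label l k =
  (if k = (1::nat) then idle_product l * (tr0_at l / 2 + 2/5 * trh0_at l) + 8/15 * idle_product l * lam_at l
   else idle_product l * (tr0_at l / 2))"

definition "data = (\<lambda>(l, k). (data_state l k, label l k)) ` ({1..p} \<times> {1, 2})"

lemma data_factor_reflection:
  assumes "l \<in> {1..p}" "j \<in> {1..p}"
  shows "\<exists>Y. qubit_reflection Y \<and> data_factor l k j = eigenprojector Y"
proof (cases "j = l")
  case True
  interpret qubit_observable "h l" "m l" by (rule qubit_observable_at[OF assms(1)])
  show ?thesis
    using True qubit_reflection_dir1 qubit_reflection_r2 by (auto simp: data_factor_def)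
next
  case False
  interpret qubit_observable "h j" "m j" by (rule qubit_observable_at[OF assms(2)])
  show ?thesis
    using False qubit_reflection_dir_idle idle_sign_expectation[OF assms(2)] by (auto simp: data_factor_def)
qed

lemma data_factor_density:
  assumes "l \<in> {1..p}" "j \<in> {1..p}"
  shows "data_factor l k j \<in> carrier_mat 2 2" "data_factor l k j * adj (data_factor l k j) = data_factor l k j"
    "mtrace (data_factor l k j) = 1"
  using data_factor_reflection[OF assms, of k]
  by (auto simp: qubit_reflection.eigenprojector_carrier qubit_reflection.adj_eigenprojector qubit_reflection.eigenprojector_idem
      qubit_reflection.mtrace_eigenprojector)

lemma mat_family_data_factor: "l \<in> {1..p} \<Longrightarrow> mat_family 2 (data_factor l k) p"
  unfolding mat_family_def using data_factor_density(1) by blast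

lemma density_matrix_data_state:
  assumes l: "l \<in> {1..p}"
  shows "density_matrix (2^p) (data_state l k)"
proof -
  note family = mat_family_data_factor[OF l]
  have family_adj: "mat_family 2 (\<lambda>j. adj (data_factor l k j)) p"
    unfolding mat_family_def using data_factor_density(1)[OF l] adj_carrier_mat by blast
  have carrier: "data_state l k \<in> carrier_mat (2^p) (2^p)"
    unfolding data_state_def by (rule kron_upto_carrier_mat[OF family])
  have "data_state l k * adj (data_state l k) = kron_upto (\<lambda>j. data_factor l k j * adj (data_factor l k j)) p"
    unfolding data_state_def adj_kron_upto kron_upto_mult[OF family family_adj] ..
  also have "\<dots> = data_state l k"
    unfolding data_state_def using data_factor_density[OF l] by (intro kron_upto_cong) auto
  finally have "psd (data_state l k)" using psd_mult_adj[OF carrier] by metis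
  moreover have "mtrace (data_state l k) = 1"
    unfolding data_state_def mtrace_kron_upto[OF family] using data_factor_density(3)[OF l]
    by (intro prod.neutral) blast
  ultimately show ?thesis using carrier by (simp add: density_matrix_def)
qed

lemma dataset_data: "dataset (2^p) data"
  unfolding dataset_def data_def using p_pos density_matrix_data_state by force

section \<open>The loss on the dataset\<close>

abbreviation "rotation \<theta> \<equiv> kron_upto (\<lambda>j. qubit_rotation (h j) (\<theta> j)) p"

lemma qnn_U_eq_rotation: "qnn_U (2^p) (local_op p h) \<theta> p = rotation \<theta>"
  using h by (intro qnn_U_local_op) auto

lemma mtrace_rotation_kron_upto:
  assumes \<sigma>: "mat_family 2 \<sigma> p"
  shows "mtrace (rotation \<theta> * kron_upto \<sigma> p * adj (rotation \<theta>) * kron_upto m p) =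
     (\<Prod>j=1..p. mtrace (qubit_rotation (h j) (\<theta> j) * \<sigma> j * adj (qubit_rotation (h j) (\<theta> j)) * m j))"
proof -
  have u: "mat_family 2 (\<lambda>j. qubit_rotation (h j) (\<theta> j)) p"
    using h_carrier by (auto simp: mat_family_def)
  note families = mat_family_mult[OF u \<sigma>] mat_family_adj[OF u]
    mat_family_mult[OF mat_family_mult[OF u \<sigma>] mat_family_adj[OF u]]
    mat_family_mult[OF mat_family_mult[OF mat_family_mult[OF u \<sigma>] mat_family_adj[OF u]] mat_family_m]
  show ?thesis
    by (simp add: adj_kron_upto kron_upto_mult[OF u \<sigma>] kron_upto_mult[OF families(1,2)]
        kron_upto_mult[OF families(3) mat_family_m] mtrace_kron_upto[OF families(4)])
qed

lemma Re_mtrace_rotation_data_state: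
  assumes l: "l \<in> {1..p}" and k: "k \<in> {1, 2}"
  shows "Re (mtrace (rotation \<theta> * data_state l k * adj (rotation \<theta>) * kron_upto m p)) =
    idle_product l * (if k = 1 then tr0_at l / 2 + 2/5 * trh0_at l + 3/5 * lam_at l * cos (2 * \<theta> l)
                      else tr0_at l / 2 + lam_at l * sin (2 * \<theta> l))"
proof -
  define g where "g j = (if j = l then (if k = 1 then tr0_at l / 2 + 2/5 * trh0_at l + 3/5 * lam_at l * cos (2 * \<theta> l)
      else tr0_at l / 2 + lam_at l * sin (2 * \<theta> l)) else idle_expectation j)" for j
  have factor: "mtrace (qubit_rotation (h j) (\<theta> j) * data_factor l k j * adj (qubit_rotation (h j) (\<theta> j)) * m j)
      = of_real (g j)" if j: "j \<in> {1..p}" for j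
  proof (cases "j = l")
    case True
    interpret qubit_observable "h l" "m l" by (rule qubit_observable_at[OF l])
    show ?thesis
      using True k by (auto simp: data_factor_def g_def mtrace_conj_dir1 mtrace_conj_r2)
  next
    case False
    interpret qubit_observable "h j" "m j" by (rule qubit_observable_at[OF j])
    show ?thesis
      using False idle_sign_expectation[OF j]
      by (simp add: data_factor_def g_def idle_expectation_def mtrace_conj_dir_idle)
  qed
  have "mtrace (rotation \<theta> * data_state l k * adj (rotation \<theta>) * kron_upto m p) = of_real (\<Prod>j=1..p. g j)"
    unfolding data_state_def mtrace_rotation_kron_upto[OF mat_family_data_factor[OF l]] using factor
    by (simp flip: of_real_prod)
  also have "(\<Prod>j=1..p. g j) = g l * idle_product l"
    using l unfolding idle_product_def by (simp add: prod.remove[of _ l] g_def)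
  finally show ?thesis by (simp add: g_def)
qed

text \<open>The data states are pairwise distinct: on qubit \<open>l\<^sub>0\<close>, the observables \<open>r1\<close> and \<open>r2\<close>
  (identity elsewhere) separate them.\<close>

definition "witness l k = kron_upto (\<lambda>j. if j = l then
    (if k = (1::nat) then qubit_observable.r1 (h l) (m l) else qubit_observable.r2 (h l) (m l)) else 1\<^sub>m 2) p"

lemma mtrace_data_state_witness:
  assumes l: "l \<in> {1..p}" and l0: "l0 \<in> {1..p}" and k: "k \<in> {1, 2}" and k0: "k0 \<in> {1, 2}"
  shows "mtrace (data_state l k * witness l0 k0) = (if l = l0 \<and> k = k0 then (if k0 = 1 then 3/5 else 1) else 0)"
proof -
  interpret qubit_observable "h l0" "m l0" by (rule qubit_observable_at[OF l0])
  define W where "W j = (if j = l0 then (if k0 = (1::nat) then r1 else r2) else 1\<^sub>m 2)" for j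
  have "mat_family 2 W p" "mat_family 2 (\<lambda>j. data_factor l k j * W j) p"
    using data_factor_density(1)[OF l] by (auto simp: W_def mat_family_def)
  then have "mtrace (data_state l k * witness l0 k0) = (\<Prod>j=1..p. mtrace (data_factor l k j * W j))"
    unfolding data_state_def witness_def W_def[symmetric]
    by (simp add: kron_upto_mult[OF mat_family_data_factor[OF l]] mtrace_kron_upto)
  also have "\<dots> = mtrace (data_factor l k l0 * W l0)"
    using l0 data_factor_density[OF l] by (simp add: prod.remove[of _ l0] W_def prod.neutral)
  also have "\<dots> = (if l = l0 \<and> k = k0 then (if k0 = 1 then 3/5 else 1) else 0)"
    using k k0 idle_sign_expectation[OF l0] mtrace_eigenprojector_r12
    by (auto simp: W_def data_factor_def)
  finally show ?thesis .
qed

lemma inj_on_data: "inj_on (\<lambda>(l, k). (data_state l k, label l k)) ({1..p} \<times> {1, 2})"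
proof (rule inj_onI, clarify)
  fix l k l0 k0 :: nat
  assume lk: "l \<in> {1..p}" "k \<in> {1, 2}" "l0 \<in> {1..p}" "k0 \<in> {1, 2}" and "data_state l k = data_state l0 k0"
  then have "mtrace (data_state l k * witness l0 k0) \<noteq> 0"
    using mtrace_data_state_witness[of l0 l0 k0 k0] by auto
  then show "l = l0 \<and> k = k0"
    using mtrace_data_state_witness[of l l0 k k0] lk by (auto split: if_splits)
qed

lemma card_data: "card data = 2 * p"
  unfolding data_def using inj_on_data by (simp add: card_image card_cartesian_product)

definition "weight l = idle_product l * lam_at l"

lemma weight_nonzero: "l \<in> {1..p} \<Longrightarrow> weight l \<noteq> 0"
proof -
  have "idle_expectation j \<noteq> 0" if "j \<in> {1..p}" for j
    using idle_sign_expectation[OF that] by blast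
  moreover assume "l \<in> {1..p}"
  then have "lam_at l > 0" by (rule qubit_observable.lam_pos[OF qubit_observable_at])
  ultimately show ?thesis by (simp add: weight_def idle_product_def)
qed

lemma qnn_loss_data:
  "qnn_loss p (local_op p h) (kron_upto m p) data \<theta> =
    1 / (2 * p) * (\<Sum>l=1..p. (weight l)\<^sup>2 * qubit_landscape (\<theta> l))"
proof -
  have dim: "dim_row (kron_upto m p) = 2^p" using kron_upto_carrier_mat[OF mat_family_m] by simp
  have "qnn_loss p (local_op p h) (kron_upto m p) data \<theta> = 1 / (2 * p) *
     (\<Sum>(\<rho>, y)\<in>data. (Re (mtrace (rotation \<theta> * \<rho> * adj (rotation \<theta>) * kron_upto m p)) - y)\<^sup>2)"
    unfolding qnn_loss_def dim Let_def qnn_U_eq_rotation card_data by simp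
  also have "(\<Sum>(\<rho>, y)\<in>data. (Re (mtrace (rotation \<theta> * \<rho> * adj (rotation \<theta>) * kron_upto m p)) - y)\<^sup>2) =
     (\<Sum>(l, k)\<in>{1..p} \<times> {1, 2}.
        (Re (mtrace (rotation \<theta> * data_state l k * adj (rotation \<theta>) * kron_upto m p)) - label l k)\<^sup>2)"
    unfolding data_def by (subst sum.reindex[OF inj_on_data]) (simp add: case_prod_beta)
  also have "\<dots> = (\<Sum>l=1..p. \<Sum>k\<in>{1, 2}.
        (Re (mtrace (rotation \<theta> * data_state l k * adj (rotation \<theta>) * kron_upto m p)) - label l k)\<^sup>2)"
    by (rule sum.cartesian_product[symmetric])
  also have "\<dots> = (\<Sum>l=1..p. (weight l)\<^sup>2 * qubit_landscape (\<theta> l))"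
    by (intro sum.cong refl)
      (simp add: Re_mtrace_rotation_data_state label_def weight_def qubit_landscape_def
        algebra_simps power2_eq_square)
  finally show ?thesis .
qed

section \<open>Spurious local minima\<close>

abbreviation "loss \<equiv> qnn_loss p (local_op p h) (kron_upto m p) data"

lemma local_min_corner: "local_min_param p loss (corner A)"
proof (rule local_min_param_separable[OF qnn_loss_data])
  fix l s assume "\<bar>s - corner A l\<bar> < pi/4"
  then have "qubit_landscape (corner A l) \<le> qubit_landscape s"
    by (auto simp: corner_def qubit_landscape_min qubit_landscape_local_min_pi_half)
  then show "(weight l)\<^sup>2 * qubit_landscape (corner A l) \<le> (weight l)\<^sup>2 * qubit_landscape s"
    by (rule mult_left_mono) simp
qed simp_all

lemma bdd_below_loss: "bdd_below (range loss)"
proof (rule bdd_belowI)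
  have "0 \<le> qubit_landscape t" for t by (simp add: qubit_landscape_def)
  then show "0 \<le> x" if "x \<in> range loss" for x
    using that by (auto simp: qnn_loss_data intro!: divide_nonneg_nonneg sum_nonneg)
qed

lemma spurious_local_min_corner:
  assumes A: "A \<subseteq> {1..p}" "A \<noteq> {}"
  shows "spurious_local_min p loss (corner A)"
proof (rule spurious_local_min_if_less[OF local_min_corner bdd_below_loss])
  obtain l where l: "l \<in> A" using A by auto
  have "(\<Sum>l=1..p. (weight l)\<^sup>2 * qubit_landscape (corner {} l))
      < (\<Sum>l=1..p. (weight l)\<^sup>2 * qubit_landscape (corner A l))"
  proof (rule sum_strict_mono_ex1)
    show "\<forall>j\<in>{1..p}. (weight j)\<^sup>2 * qubit_landscape (corner {} j) \<le> (weight j)\<^sup>2 * qubit_landscape (corner A j)"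
      by (auto simp: corner_def qubit_landscape_min intro: mult_left_mono)
    show "\<exists>j\<in>{1..p}. (weight j)\<^sup>2 * qubit_landscape (corner {} j) < (weight j)\<^sup>2 * qubit_landscape (corner A j)"
      using l A weight_nonzero qubit_landscape_min_less_pi_half by (intro bexI[of _ l]) (auto simp: corner_def)
  qed simp
  then show "loss (corner {}) < loss (corner A)"
    using p_pos by (simp add: qnn_loss_data divide_strict_right_mono)
qed

end

theorem proposition1:
  fixes p :: nat and h m :: "nat \<Rightarrow> complex mat"
  assumes "p \<ge> 1"
    and "\<forall>l\<in>{1..p}. h l \<in> carrier_mat 2 2 \<and> hermitian (h l) \<and> h l * h l = 1\<^sub>m 2"
    and "\<forall>l\<in>{1..p}. m l \<in> carrier_mat 2 2 \<and> hermitian (m l)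
           \<and> m l + h l * m l * h l \<noteq> 0\<^sub>m 2 2 \<and> m l - h l * m l * h l \<noteq> 0\<^sub>m 2 2"
  shows "with_linear_independence p (local_op p h) (kron_upto m p)
    \<and> (\<exists>S. dataset (2 ^ p) S \<and>
          (\<exists>T. T \<subseteq> period_box p \<and> card T = 2 ^ p - 1 \<and>
               (\<forall>\<theta>\<in>T. spurious_local_min p (qnn_loss p (local_op p h) (kron_upto m p) S) \<theta>)))"
proof -
  interpret qnn_product p h m
    using assms by unfold_locales
  have "corner ` (Pow {1..p} - {{}}) \<subseteq> period_box p"
    using corner_period_box by blast
  moreover have "\<forall>\<theta>\<in>corner ` (Pow {1..p} - {{}}). spurious_local_min p loss \<theta>"
    using spurious_local_min_corner by blast
  ultimately show ?thesis
    using with_linear_independence dataset_data card_nonempty_corners by blast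
qed

end
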